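(* In the setting of the context, define $c\colon G_F\to\mathbb{T}$ by $c(\alpha)=\varphi(n)(\Phi(\alpha))/n(\alpha)$, where $U\in\mathrm{Bis}(G)$ and $n\in C_0(U)$ are any choices with $\alpha\in U$ and $n(\alpha)\neq0$ (this value lies in $\mathbb{T}$ and is independent of choices). Then $c$ is a continuous groupoid homomorphism.
   Context: $G$ is an étale groupoid, $H$ an effective étale groupoid (étale groupoids are locally compact Hausdorff with $d$ a local homeomorphism; effective means the interior of the isotropy equals the unit space), $\varphi\colon C^*_r(G)\to C^*_r(H)$ a *-homomorphism of reduced groupoid C*-algebras with $\varphi(C_0(G^{(0)}))\subset C_0(H^{(0)})$ an ideal of $C_0(H^{(0)})$. Elements of $C^*_r$ are regarded as functions on the groupoid via the standard evaluation map. $\mathrm{Bis}(G)$ is the set of open bisections and $C_0(U)$ the closure of $C_c(U)$ in $C^*_r(G)$. $F\subset G^{(0)}$ is the closed invariant set with $\ker\varphi\cap C_0(G^{(0)})=C_0(G^{(0)}\setminus F)$, $G_F=d^{-1}(F)$. $\psi\colon\mathrm{Bis}(G)\to\mathrm{Bis}(H)$ is the semigroup homomorphism with $\varphi(C_0(U))=C_0(\psi(U))$. $\sigma\colon F\to H^{(0)}$ is the homeomorphism onto the open set $V$ with $\varphi(C_0(G^{(0)}))=C_0(V)$ determined by $\varphi(f)(\sigma(x))=f(x)$ for $f\in C_0(G^{(0)})$, $x\in F$. $\Phi\colon G_F\to H$ is the groupoid homomorphism given by: for $\alpha\in G_F$ and any $U\in\mathrm{Bis}(G)$ with $\alpha\in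 U$, $\Phi(\alpha)$ is the unique $\delta\in\psi(U)$ with $d(\delta)=\sigma(d(\alpha))$ (this exists and is independent of $U$). *)

theory Defs
  imports "HOL-Analysis.Analysis"
begin

text \<open>A topological groupoid whose set of arrows is the whole (Hausdorff) type.
  Composition gmul a b is meant for composable pairs (gsrc a = grng b).\<close>
record 'g groupoid =
  gsrc :: "'g \<Rightarrow> 'g"
  grng :: "'g \<Rightarrow> 'g"
  gmul :: "'g \<Rightarrow> 'g \<Rightarrow> 'g"
  ginv :: "'g \<Rightarrow> 'g"

definition units :: "'g groupoid \<Rightarrow> 'g set" where
  "units G = range (gsrc G)"

definition is_groupoid :: "'g groupoid \<Rightarrow> bool" where
  "is_groupoid G \<longleftrightarrow>
     range (grng G) \<subseteq> units G \<and>
     (\<forall>u\<in>units G. gsrc G u = u \<and> grng G u = u) \<and>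
     (\<forall>a b. gsrc G a = grng G b \<longrightarrow>
        gsrc G (gmul G a b) = gsrc G b \<and> grng G (gmul G a b) = grng G a) \<and>
     (\<forall>a b c. gsrc G a = grng G b \<and> gsrc G b = grng G c \<longrightarrow>
        gmul G (gmul G a b) c = gmul G a (gmul G b c)) \<and>
     (\<forall>a. gmul G (grng G a) a = a \<and> gmul G a (gsrc G a) = a) \<and>
     (\<forall>a. gsrc G (ginv G a) = grng G a \<and> grng G (ginv G a) = gsrc G a \<and>
          gmul G a (ginv G a) = grng G a \<and> gmul G (ginv G a) a = gsrc G a)"

definition etale_groupoid :: "('g::t2_space) groupoid \<Rightarrow> bool" where
  "etale_groupoid G \<longleftrightarrow>
     is_groupoid G \<and>
     locally compact (UNIV :: 'g set) \<and>
     continuous_on {(a, b). gsrc G a = grng G b} (\<lambda>(a, b). gmul G a b) \<and>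
     continuous_on UNIV (ginv G) \<and>
     (\<forall>\<gamma>. \<exists>U. open U \<and> \<gamma> \<in> U \<and> open (gsrc G ` U) \<and>
          (\<exists>g. homeomorphism U (gsrc G ` U) (gsrc G) g))"

definition effective :: "('g::topological_space) groupoid \<Rightarrow> bool" where
  "effective G \<longleftrightarrow> interior {a. gsrc G a = grng G a} = units G"

definition open_bisections :: "('g::topological_space) groupoid \<Rightarrow> 'g set set" where
  "open_bisections G = {U. open U \<and> inj_on (gsrc G) U \<and> inj_on (grng G) U}"

definition bis_prod :: "'g groupoid \<Rightarrow> 'g set \<Rightarrow> 'g set \<Rightarrow> 'g set" where
  "bis_prod G U V = {gmul G a b | a b. a \<in> U \<and> b \<in> V \<and> gsrc G a = grng G b}"

definition Cc_on :: "('g::topological_space) set \<Rightarrow> ('g \<Rightarrow> complex) set" where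
  "Cc_on U = {f. continuous_on UNIV f \<and> compact (closure {x. f x \<noteq> 0}) \<and>
                 closure {x. f x \<noteq> 0} \<subseteq> U}"

definition fiber :: "'g groupoid \<Rightarrow> 'g \<Rightarrow> 'g set" where
  "fiber G x = {\<alpha>. gsrc G \<alpha> = x}"

definition l2 :: "'a set \<Rightarrow> ('a \<Rightarrow> complex) \<Rightarrow> bool" where
  "l2 X \<xi> \<longleftrightarrow> (\<lambda>\<alpha>. (cmod (\<xi> \<alpha>))\<^sup>2) summable_on X"

definition l2norm :: "'a set \<Rightarrow> ('a \<Rightarrow> complex) \<Rightarrow> real" where
  "l2norm X \<xi> = sqrt (\<Sum>\<^sub>\<infinity>\<alpha>\<in>X. (cmod (\<xi> \<alpha>))\<^sup>2)"

definition regrep :: "'g groupoid \<Rightarrow> ('g \<Rightarrow> complex) \<Rightarrow> 'g \<Rightarrow> ('g \<Rightarrow> complex) \<Rightarrow> 'g \<Rightarrow> complex" where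
  "regrep G f x \<xi> = (\<lambda>\<gamma>. \<Sum>\<^sub>\<infinity>\<alpha>\<in>fiber G x. f (gmul G \<gamma> (ginv G \<alpha>)) * \<xi> \<alpha>)"

definition opnorm_at :: "'g groupoid \<Rightarrow> ('g \<Rightarrow> complex) \<Rightarrow> 'g \<Rightarrow> real" where
  "opnorm_at G f x = Sup {l2norm (fiber G x) (regrep G f x \<xi>) | \<xi>.
                           l2 (fiber G x) \<xi> \<and> l2norm (fiber G x) \<xi> \<le> 1}"

definition rnorm :: "'g groupoid \<Rightarrow> ('g \<Rightarrow> complex) \<Rightarrow> real" where
  "rnorm G f = Sup (opnorm_at G f ` units G)"

definition rcauchy :: "'g groupoid \<Rightarrow> (nat \<Rightarrow> 'g \<Rightarrow> complex) \<Rightarrow> bool" where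
  "rcauchy G f \<longleftrightarrow> (\<forall>e>0. \<exists>N. \<forall>m\<ge>N. \<forall>n\<ge>N. rnorm G (\<lambda>\<gamma>. f m \<gamma> - f n \<gamma>) < e)"

text \<open>Closure of C_c(U) in C*_r(G), viewed as functions on G via the (injective)
  evaluation map j: an element is the pointwise limit of a reduced-norm Cauchy
  sequence from C_c(U).\<close>
definition C0_on :: "('g::topological_space) groupoid \<Rightarrow> 'g set \<Rightarrow> ('g \<Rightarrow> complex) set" where
  "C0_on G U = {a. \<exists>f. (\<forall>n. f n \<in> Cc_on U) \<and> rcauchy G f \<and>
                       (\<forall>\<gamma>. (\<lambda>n. f n \<gamma>) \<longlonglongrightarrow> a \<gamma>)}"

definition Cr :: "('g::topological_space) groupoid \<Rightarrow> ('g \<Rightarrow> complex) set" where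
  "Cr G = C0_on G UNIV"

definition conv :: "'g groupoid \<Rightarrow> ('g \<Rightarrow> complex) \<Rightarrow> ('g \<Rightarrow> complex) \<Rightarrow> 'g \<Rightarrow> complex" where
  "conv G a b = (\<lambda>\<gamma>. \<Sum>\<^sub>\<infinity>\<beta>\<in>fiber G (gsrc G \<gamma>). a (gmul G \<gamma> (ginv G \<beta>)) * b \<beta>)"

definition invol :: "'g groupoid \<Rightarrow> ('g \<Rightarrow> complex) \<Rightarrow> 'g \<Rightarrow> complex" where
  "invol G a = (\<lambda>\<gamma>. cnj (a (ginv G \<gamma>)))"

definition star_hom :: "('g::topological_space) groupoid \<Rightarrow> ('h::topological_space) groupoid \<Rightarrow>
     (('g \<Rightarrow> complex) \<Rightarrow> ('h \<Rightarrow> complex)) \<Rightarrow> bool" where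
  "star_hom G H \<phi> \<longleftrightarrow>
     (\<forall>a\<in>Cr G. \<phi> a \<in> Cr H) \<and>
     (\<forall>a\<in>Cr G. \<forall>b\<in>Cr G. \<phi> (\<lambda>\<gamma>. a \<gamma> + b \<gamma>) = (\<lambda>\<eta>. \<phi> a \<eta> + \<phi> b \<eta>)) \<and>
     (\<forall>a\<in>Cr G. \<forall>z. \<phi> (\<lambda>\<gamma>. z * a \<gamma>) = (\<lambda>\<eta>. z * \<phi> a \<eta>)) \<and>
     (\<forall>a\<in>Cr G. \<forall>b\<in>Cr G. \<phi> (conv G a b) = conv H (\<phi> a) (\<phi> b)) \<and>
     (\<forall>a\<in>Cr G. \<phi> (invol G a) = invol H (\<phi> a))"

end

theory Submission
  imports Defs
begin

text \<open>For \<open>\<alpha>\<close> with \<open>d \<alpha> \<in> F\<close>, every \<open>n \<in> C0_on G U\<close> on an open bisection \<open>U \<ni> \<alpha>\<close> satisfies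
  \<open>|\<phi> n (\<Phi> \<alpha>)| = |n \<alpha>|\<close>, and for two such functions
  \<open>cnj (\<phi> m (\<Phi> \<alpha>)) * \<phi> n (\<Phi> \<alpha>) = cnj (m \<alpha>) * n \<alpha>\<close>.
  To see this, note that \<open>m\<^sup>* * n\<close> lives on the bisection \<open>W\<^sup>-\<^sup>1 U\<close> and takes the value
  \<open>cnj (m \<alpha>) * n \<alpha>\<close> at the unit \<open>d \<alpha>\<close>; multiplying by a bump \<open>f\<close> at \<open>d \<alpha>\<close> supported in
  \<open>d (U \<inter> W)\<close> cuts it down to a function on the unit space, where \<open>\<phi>\<close> is evaluation at \<open>\<sigma>\<close>,
  while on the other side \<open>\<phi> (f * m\<^sup>* * n)\<close> is computed in \<open>H\<close> at \<open>\<sigma> (d \<alpha>) = d (\<Phi> \<alpha>)\<close>.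
  Hence the ratio \<open>\<phi> n (\<Phi> \<alpha>) / n \<alpha>\<close> lies on the circle and does not depend on \<open>n\<close>.
  Multiplicativity follows from \<open>\<Phi> (\<alpha> \<beta>) = \<Phi> \<alpha> \<Phi> \<beta>\<close> and \<open>(n * m) (\<alpha> \<beta>) = n \<alpha> * m \<beta>\<close> for
  functions on bisections; continuity from the local formula \<open>c = (\<phi> n \<circ> \<Phi>) / n\<close>, in which
  \<open>\<Phi>\<close> is \<open>\<sigma> \<circ> d\<close> followed by the inverse of \<open>d\<close> on the bisection \<open>\<psi> U\<close>.\<close>

lemma infsum_eq_single:
  fixes f :: "'a \<Rightarrow> 'b::{comm_monoid_add,t2_space}"
  assumes "b \<in> S" "\<And>x. x \<in> S \<Longrightarrow> x \<noteq> b \<Longrightarrow> f x = 0"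
  shows "infsum f S = f b"
proof -
  have "infsum f S = infsum f {b}" by (rule infsum_cong_neutral) (use assms in auto)
  then show ?thesis by simp
qed

lemma Hausdorff_space_euclidean_t2: "Hausdorff_space (euclidean :: ('a::t2_space) topology)"
  unfolding Hausdorff_space_def disjnt_def using separation_t2 by auto

lemma Cc_onI:
  fixes g :: "'a::t2_space \<Rightarrow> complex"
  assumes "continuous_on UNIV g" "compact K" "{x. g x \<noteq> 0} \<subseteq> K" "K \<subseteq> U"
  shows "g \<in> Cc_on U"
proof -
  have "closure {x. g x \<noteq> 0} \<subseteq> K"
    using assms(2,3) by (simp add: closure_minimal compact_imp_closed)
  moreover from this have "compact (closure {x. g x \<noteq> 0})"
    using compact_Int_closed[OF assms(2) closed_closure] by (metis inf.absorb2)
  ultimately show ?thesis using assms(1,4) by (auto simp: Cc_on_def)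
qed

lemma exists_Cc_bump:
  fixes A :: "('a::t2_space) set"
  assumes lc: "locally compact (UNIV :: 'a set)" and A: "open A" "p \<in> A"
  obtains f where "f \<in> Cc_on A" "f p = 1" "\<And>x. cmod (f x) \<le> 1"
proof -
  obtain U K where UK: "open U" "compact K" "p \<in> U" "U \<subseteq> K" "K \<subseteq> A"
    using lc A unfolding locally_def by (metis open_openin open_subopen subtopology_UNIV)
  have "locally_compact_space (euclidean :: 'a topology)"
    unfolding locally_compact_space_def using lc unfolding locally_def
    by (metis UNIV_I compactin_euclidean_iff open_UNIV open_openin subtopology_UNIV)
  then have crs: "completely_regular_space (euclidean :: 'a topology)"
    by (rule locally_compact_regular_imp_completely_regular_space)
      (simp add: Hausdorff_space_euclidean_t2)
  obtain g where g: "continuous_map euclidean (subtopology euclidean {0..1::real}) g"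
    "g ` (UNIV - U) \<subseteq> {0}" "g ` {p} \<subseteq> {1}"
    by (rule Urysohn_completely_regular_compact_closed[of 0 1 euclidean "{p}" "UNIV - U"])
      (use crs UK in \<open>auto simp: disjnt_def closed_Diff\<close>)
  have gc: "continuous_on UNIV g" and g01: "\<And>x. g x \<in> {0..1}"
    using g(1) unfolding continuous_map_in_subtopology by auto
  define f where "f x = complex_of_real (g x)" for x
  have "f \<in> Cc_on A"
  proof (rule Cc_onI[OF _ UK(2) _ UK(5)])
    show "continuous_on UNIV f" unfolding f_def by (intro continuous_intros gc)
    show "{x. f x \<noteq> 0} \<subseteq> K" using g(2) UK by (force simp: f_def)
  qed
  moreover have "f p = 1" using g(3) by (simp add: f_def)
  moreover have "cmod (f x) \<le> 1" for x using g01[of x] by (simp add: f_def)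
  ultimately show thesis using that by blast
qed

lemma continuous_on_zero_outside:
  assumes "open D" "continuous_on D f" "closed K" "K \<subseteq> D" "\<And>x. x \<notin> K \<Longrightarrow> f x = 0"
  shows "continuous_on UNIV f"
proof -
  have "continuous_on (- K) f"
    using continuous_on_const[of "- K" 0] by (rule continuous_on_cong[THEN iffD1, rotated 2]) (use assms in auto)
  then have "continuous_on (D \<union> - K) f" using assms by (intro continuous_on_open_Un) auto
  moreover have "D \<union> - K = UNIV" using assms by auto
  ultimately show ?thesis by simp
qed

lemma continuous_on_open_cover:
  fixes f :: "'a::t2_space \<Rightarrow> 'b::topological_space"
  assumes "\<And>x. x \<in> S \<Longrightarrow> \<exists>N. open N \<and> x \<in> N \<and> continuous_on (S \<inter> N) f"
  shows "continuous_on S f"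
proof (rule continuous_on_eq_continuous_within[THEN iffD2], intro ballI)
  fix x assume "x \<in> S"
  then obtain N where N: "open N" "x \<in> N" "continuous_on (S \<inter> N) f" using assms by blast
  then have "continuous (at x within (S \<inter> N)) f"
    using \<open>x \<in> S\<close> unfolding continuous_on_eq_continuous_within by blast
  moreover have "at x within (S \<inter> N) = at x within S" by (rule at_within_nhd[OF N(2,1)]) auto
  ultimately show "continuous (at x within S) f" by simp
qed

lemma Cc_on_vanish: assumes "f \<in> Cc_on U" "x \<notin> U" shows "f x = 0"
proof -
  have "{x. f x \<noteq> 0} \<subseteq> U" using assms(1) closure_subset unfolding Cc_on_def by fastforce
  then show ?thesis using assms(2) by auto
qed

lemma Cc_on_mono: "f \<in> Cc_on U \<Longrightarrow> U \<subseteq> U' \<Longrightarrow> f \<in> Cc_on U'"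
  unfolding Cc_on_def by auto

lemma Cc_on_bounded:
  assumes "f \<in> Cc_on U" shows "\<exists>M. \<forall>x. cmod (f x) \<le> M"
proof -
  let ?K = "closure {x. f x \<noteq> 0}"
  have "compact (f ` ?K)"
    using assms compact_continuous_image continuous_on_subset unfolding Cc_on_def by blast
  then obtain M where M: "\<forall>y\<in>f ` ?K. norm y \<le> M"
    unfolding bounded_iff by (meson compact_imp_bounded bounded_iff)
  have "cmod (f x) \<le> max M 0" for x
    using M closure_subset[of "{x. f x \<noteq> 0}"] by (cases "f x = 0") fastforce+
  then show ?thesis by blast
qed

lemma Cc_on_mult_left:
  fixes f q :: "'a::t2_space \<Rightarrow> complex"
  assumes "f \<in> Cc_on U" "continuous_on UNIV q" "U \<inter> closure {x. q x \<noteq> 0} \<subseteq> U'"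
  shows "(\<lambda>\<gamma>. q \<gamma> * f \<gamma>) \<in> Cc_on U'"
proof (rule Cc_onI)
  let ?K = "closure {x. f x \<noteq> 0} \<inter> closure {x. q x \<noteq> 0}"
  show "compact ?K" using assms(1) by (simp add: Cc_on_def compact_Int_closed)
  show "{x. q x * f x \<noteq> 0} \<subseteq> ?K" using closure_subset by fastforce
  show "?K \<subseteq> U'" using assms(1,3) by (auto simp: Cc_on_def)
  show "continuous_on UNIV (\<lambda>\<gamma>. q \<gamma> * f \<gamma>)"
    using assms(1,2) by (intro continuous_intros) (simp_all add: Cc_on_def)
qed

lemma C0_onE:
  assumes "a \<in> C0_on G U"
  obtains f where "\<And>n. f n \<in> Cc_on U" "rcauchy G f" "\<And>\<gamma>. (\<lambda>n. f n \<gamma>) \<longlonglongrightarrow> a \<gamma>"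
proof -
  obtain f where "(\<forall>n. f n \<in> Cc_on U) \<and> rcauchy G f \<and> (\<forall>\<gamma>. (\<lambda>n. f n \<gamma>) \<longlonglongrightarrow> a \<gamma>)"
    using assms unfolding C0_on_def by blast
  then show thesis using that by blast
qed

lemma C0_onI:
  assumes "\<And>n. f n \<in> Cc_on U" "rcauchy G f" "\<And>\<gamma>. (\<lambda>n. f n \<gamma>) \<longlonglongrightarrow> a \<gamma>"
  shows "a \<in> C0_on G U"
  unfolding C0_on_def using assms by blast

lemma C0_on_mono:
  assumes "U \<subseteq> U'" shows "C0_on G U \<subseteq> C0_on G U'"
proof
  fix a assume "a \<in> C0_on G U"
  then obtain f where f: "\<And>n. f n \<in> Cc_on U" "rcauchy G f" "\<And>\<gamma>. (\<lambda>n. f n \<gamma>) \<longlonglongrightarrow> a \<gamma>"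
    by (rule C0_onE) (rule that)
  show "a \<in> C0_on G U'" by (rule C0_onI[OF Cc_on_mono[OF f(1) assms] f(2,3)])
qed

lemma C0_on_subset_Cr: "C0_on G U \<subseteq> Cr G"
  unfolding Cr_def by (rule C0_on_mono) simp

lemma rcauchy_dominated:
  assumes "rcauchy G f" "rcauchy G h" "0 \<le> K"
    and "\<And>m n. rnorm G (\<lambda>\<gamma>. g m \<gamma> - g n \<gamma>)
                \<le> K * max (rnorm G (\<lambda>\<gamma>. f m \<gamma> - f n \<gamma>)) (rnorm G (\<lambda>\<gamma>. h m \<gamma> - h n \<gamma>))"
  shows "rcauchy G g"
  unfolding rcauchy_def
proof (intro allI impI)
  fix e :: real assume "e > 0"
  then have e': "e / (K + 1) > 0" using assms(3) by simp
  obtain N1 where N1: "\<forall>m\<ge>N1. \<forall>n\<ge>N1. rnorm G (\<lambda>\<gamma>. f m \<gamma> - f n \<gamma>) < e / (K + 1)"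
    using assms(1) e' unfolding rcauchy_def by meson
  obtain N2 where N2: "\<forall>m\<ge>N2. \<forall>n\<ge>N2. rnorm G (\<lambda>\<gamma>. h m \<gamma> - h n \<gamma>) < e / (K + 1)"
    using assms(2) e' unfolding rcauchy_def by meson
  have "rnorm G (\<lambda>\<gamma>. g m \<gamma> - g n \<gamma>) < e" if "m \<ge> max N1 N2" "n \<ge> max N1 N2" for m n
  proof -
    have "K * max (rnorm G (\<lambda>\<gamma>. f m \<gamma> - f n \<gamma>)) (rnorm G (\<lambda>\<gamma>. h m \<gamma> - h n \<gamma>))
          \<le> K * (e / (K + 1))"
      using N1 N2 that assms(3) by (intro mult_left_mono) (auto intro: less_imp_le)
    also have "\<dots> < e" using \<open>e > 0\<close> assms(3) by (simp add: field_simps)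
    finally show ?thesis using assms(4)[of m n] by linarith
  qed
  then show "\<exists>N. \<forall>m\<ge>N. \<forall>n\<ge>N. rnorm G (\<lambda>\<gamma>. g m \<gamma> - g n \<gamma>) < e" by blast
qed

lemma open_bisectionsD:
  assumes "B \<in> open_bisections G" shows "open B" "inj_on (gsrc G) B" "inj_on (grng G) B"
  using assms by (simp_all add: open_bisections_def)

section \<open>Groupoid algebra\<close>

locale algebraic_groupoid =
  fixes G :: "'g groupoid"
  assumes groupoid: "is_groupoid G"
begin

abbreviation "d \<equiv> gsrc G"
abbreviation "r \<equiv> grng G"
abbreviation "m \<equiv> gmul G"
abbreviation "i \<equiv> ginv G"

lemma unit_iff_d_eq: "u \<in> units G \<longleftrightarrow> d u = u"
  using groupoid unfolding is_groupoid_def units_def by (metis rangeI)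

lemma d_in_units [simp]: "d a \<in> units G"
  by (simp add: units_def)

lemma r_in_units [simp]: "r a \<in> units G"
  using groupoid unfolding is_groupoid_def by auto

lemma r_unit: "u \<in> units G \<Longrightarrow> r u = u"
  using groupoid unfolding is_groupoid_def by auto

lemma d_d [simp]: "d (d a) = d a"
  using unit_iff_d_eq d_in_units by blast

lemma r_d [simp]: "r (d a) = d a"
  using r_unit d_in_units by blast

lemma d_mult [simp]: "d a = r b \<Longrightarrow> d (m a b) = d b"
  using groupoid unfolding is_groupoid_def by auto

lemma r_mult [simp]: "d a = r b \<Longrightarrow> r (m a b) = r a"
  using groupoid unfolding is_groupoid_def by auto

lemma mult_assoc: "d a = r b \<Longrightarrow> d b = r c \<Longrightarrow> m (m a b) c = m a (m b c)"
  using groupoid unfolding is_groupoid_def by auto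

lemma mult_r_left [simp]: "m (r a) a = a"
  using groupoid unfolding is_groupoid_def by auto

lemma mult_d_right [simp]: "m a (d a) = a"
  using groupoid unfolding is_groupoid_def by auto

lemma d_inv [simp]: "d (i a) = r a"
  using groupoid unfolding is_groupoid_def by auto

lemma r_inv [simp]: "r (i a) = d a"
  using groupoid unfolding is_groupoid_def by auto

lemma mult_inv_right [simp]: "m a (i a) = r a"
  using groupoid unfolding is_groupoid_def by auto

lemma mult_inv_left [simp]: "m (i a) a = d a"
  using groupoid unfolding is_groupoid_def by auto

lemma inv_inv [simp]: "i (i a) = a"
proof -
  have "i (i a) = m (i (i a)) (d a)" by (metis mult_d_right d_inv r_inv)
  also have "\<dots> = m (i (i a)) (m (i a) a)" by simp
  also have "\<dots> = m (m (i (i a)) (i a)) a" by (rule mult_assoc[symmetric]) auto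
  also have "\<dots> = a" by simp
  finally show ?thesis .
qed

lemma inv_unit:
  assumes "u \<in> units G" shows "i u = u"
proof -
  have "i u = m (d u) (i u)" using mult_r_left[of "i u"] by simp
  also have "\<dots> = m u (i u)" using assms unit_iff_d_eq by simp
  also have "\<dots> = u" using r_unit[OF assms] by simp
  finally show ?thesis .
qed

lemma inv_d [simp]: "i (d a) = d a"
  by (simp add: inv_unit)

lemma inv_image_eq_vimage: "i ` S = i -` S"
  by (auto simp: image_iff) (metis inv_inv)

lemma mult_cancel_left:
  assumes "d a = r b" "d a = r c" "m a b = m a c" shows "b = c"
proof -
  have "b = m (m (i a) a) b" using assms(1) by simp
  also have "\<dots> = m (i a) (m a c)" using assms by (subst mult_assoc) auto
  also have "\<dots> = m (m (i a) a) c" using assms(2) by (intro mult_assoc[symmetric]) auto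
  also have "\<dots> = c" using assms(2) by simp
  finally show ?thesis .
qed

lemma mult_cancel_right:
  assumes "d b = r a" "d c = r a" "m b a = m c a" shows "b = c"
proof -
  have "b = m b (m a (i a))" using assms(1) mult_d_right[of b] by simp
  also have "\<dots> = m (m c a) (i a)" using assms by (subst mult_assoc[symmetric]) auto
  also have "\<dots> = m c (m a (i a))" using assms(2) by (intro mult_assoc) auto
  also have "\<dots> = c" using assms(2) mult_d_right[of c] by simp
  finally show ?thesis .
qed

lemma mult_in_units_imp_inv:
  assumes "d a = r b" "m a b \<in> units G" shows "b = i a"
proof -
  have "m a b = m a (i a)" using r_unit[OF assms(2)] assms(1) by simp
  then show ?thesis by (rule mult_cancel_left[OF assms(1), rotated]) simp
qed

lemma mult_mult_inv: "d a = r b \<Longrightarrow> m (m a b) (i b) = a"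
  using mult_assoc[of a b "i b"] mult_d_right[of a] by simp

lemma mult_inv_mult: "d a = d b \<Longrightarrow> m (m a (i b)) b = a"
  using mult_assoc[of a "i b" b] mult_d_right[of a] by simp

lemma bis_prod_inv_in_units:
  assumes "inj_on d W" "inj_on r U" "\<gamma> \<in> bis_prod G (i ` W) U" "r \<gamma> \<in> d ` (U \<inter> W)"
  shows "\<gamma> \<in> units G"
proof -
  obtain w u where wu: "w \<in> W" "u \<in> U" "d (i w) = r u" "\<gamma> = m (i w) u"
    using assms(3) unfolding bis_prod_def by blast
  then obtain w' where "w' \<in> U \<inter> W" "d w' = d w" using assms(4) by auto
  then have "w' = w" using assms(1) wu(1) by (auto dest: inj_onD)
  then have "w \<in> U" using \<open>w' \<in> U \<inter> W\<close> by simp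
  moreover have "r w = r u" using wu(3) by simp
  ultimately have "w = u" using assms(2) wu(2) by (auto dest: inj_onD)
  then show ?thesis using wu(4) by simp
qed

end

section \<open>Convolution and the reduced norm on bisections\<close>

context algebraic_groupoid
begin

lemma mem_fiber [simp]: "\<alpha> \<in> fiber G x \<longleftrightarrow> d \<alpha> = x"
  by (simp add: fiber_def)

lemma conv_bisection:
  assumes "\<And>x. x \<notin> B \<Longrightarrow> b x = 0" "inj_on d B" "\<beta> \<in> B" "d \<beta> = d \<gamma>"
  shows "conv G a b \<gamma> = a (m \<gamma> (i \<beta>)) * b \<beta>"
  unfolding conv_def
proof (rule infsum_eq_single)
  fix \<delta> assume "\<delta> \<in> fiber G (d \<gamma>)" "\<delta> \<noteq> \<beta>"
  then have "\<delta> \<notin> B" using assms(2-4) by (metis inj_onD mem_fiber)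
  then show "a (m \<gamma> (i \<delta>)) * b \<delta> = 0" using assms(1) by simp
qed (use assms in simp)

lemma conv_bisection_mult:
  assumes "\<And>x. x \<notin> B \<Longrightarrow> b x = 0" "inj_on d B" "\<beta> \<in> B" "d \<alpha> = r \<beta>"
  shows "conv G a b (m \<alpha> \<beta>) = a \<alpha> * b \<beta>"
  using conv_bisection[where b=b and B=B and \<gamma>="m \<alpha> \<beta>", OF assms(1-3)] assms(4)
  by (simp add: mult_mult_inv)

lemma conv_bisection_outside:
  assumes "\<And>x. x \<notin> B \<Longrightarrow> b x = 0" "\<not> (\<exists>\<beta>\<in>B. d \<beta> = d \<gamma>)"
  shows "conv G a b \<gamma> = 0"
  unfolding conv_def by (rule infsum_0) (use assms in auto)

lemma conv_units_left:
  assumes "\<And>x. x \<notin> units G \<Longrightarrow> f x = 0"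
  shows "conv G f b \<gamma> = f (r \<gamma>) * b \<gamma>"
proof -
  have "conv G f b \<gamma> = f (m \<gamma> (i \<gamma>)) * b \<gamma>"
    unfolding conv_def
  proof (rule infsum_eq_single)
    fix \<delta> assume \<delta>: "\<delta> \<in> fiber G (d \<gamma>)" "\<delta> \<noteq> \<gamma>"
    have "m \<gamma> (i \<delta>) \<notin> units G"
    proof
      assume "m \<gamma> (i \<delta>) \<in> units G"
      moreover have "d \<gamma> = r (i \<delta>)" using \<delta> by simp
      ultimately have "i \<delta> = i \<gamma>" by (rule mult_in_units_imp_inv[rotated])
      then show False using \<delta>(2) by (metis inv_inv)
    qed
    then show "f (m \<gamma> (i \<delta>)) * b \<delta> = 0" using assms by simp
  qed simp
  then show ?thesis by simp
qed

lemma conv_invol_at_unit: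
  assumes "\<And>x. x \<notin> B \<Longrightarrow> b x = 0" "inj_on d B" "\<beta> \<in> B"
  shows "conv G (invol G a) b (d \<beta>) = cnj (a \<beta>) * b \<beta>"
proof -
  have "m (d \<beta>) (i \<beta>) = i \<beta>" using mult_r_left[of "i \<beta>"] by simp
  then show ?thesis using conv_bisection[where b=b and B=B and \<gamma>="d \<beta>", OF assms] by (simp add: invol_def)
qed

lemma mult_inv_in_bisection_eq_right:
  assumes "inj_on r W" "d \<alpha> = d \<gamma>" "d \<beta> = d \<gamma>" "m \<gamma> (i \<alpha>) \<in> W" "m \<gamma> (i \<beta>) \<in> W"
  shows "\<alpha> = \<beta>"
proof -
  have c: "d \<gamma> = r (i \<alpha>)" "d \<gamma> = r (i \<beta>)" using assms(2,3) by simp_all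
  then have "r (m \<gamma> (i \<alpha>)) = r (m \<gamma> (i \<beta>))" by simp
  then have "m \<gamma> (i \<alpha>) = m \<gamma> (i \<beta>)" by (rule inj_onD[OF assms(1) _ assms(4,5)])
  then have "i \<alpha> = i \<beta>" by (rule mult_cancel_left[OF c])
  then show ?thesis by (metis inv_inv)
qed

lemma mult_inv_in_bisection_eq_left:
  assumes "inj_on d W" "d \<gamma> = d \<alpha>" "d \<delta> = d \<alpha>" "m \<gamma> (i \<alpha>) \<in> W" "m \<delta> (i \<alpha>) \<in> W"
  shows "\<gamma> = \<delta>"
proof -
  have c: "d \<gamma> = r (i \<alpha>)" "d \<delta> = r (i \<alpha>)" using assms(2,3) by simp_all
  then have "d (m \<gamma> (i \<alpha>)) = d (m \<delta> (i \<alpha>))" by simp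
  then have "m \<gamma> (i \<alpha>) = m \<delta> (i \<alpha>)" by (rule inj_onD[OF assms(1) _ assms(4,5)])
  then show ?thesis by (rule mult_cancel_right[OF c])
qed

lemma regrep_bisection:
  assumes hW: "\<And>\<gamma>. \<gamma> \<notin> W \<Longrightarrow> h \<gamma> = 0" and "inj_on d W" "inj_on r W"
  obtains D p where "D \<subseteq> fiber G x" "inj_on p D" "p ` D \<subseteq> fiber G x"
    "\<And>\<gamma>. \<gamma> \<in> D \<Longrightarrow> regrep G h x \<xi> \<gamma> = h (m \<gamma> (i (p \<gamma>))) * \<xi> (p \<gamma>)"
    "\<And>\<gamma>. \<gamma> \<in> fiber G x - D \<Longrightarrow> regrep G h x \<xi> \<gamma> = 0"
proof -
  define X where "X = fiber G x"
  define D where "D = {\<gamma>\<in>X. \<exists>\<alpha>\<in>X. m \<gamma> (i \<alpha>) \<in> W}"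
  define p where "p \<gamma> = (THE \<alpha>. \<alpha> \<in> X \<and> m \<gamma> (i \<alpha>) \<in> W)" for \<gamma>
  have uniq: "\<alpha>1 = \<alpha>2"
    if "\<gamma> \<in> X" "\<alpha>1 \<in> X" "\<alpha>2 \<in> X" "m \<gamma> (i \<alpha>1) \<in> W" "m \<gamma> (i \<alpha>2) \<in> W" for \<gamma> \<alpha>1 \<alpha>2
    by (rule mult_inv_in_bisection_eq_right[OF \<open>inj_on r W\<close>]) (use that in \<open>simp_all add: X_def\<close>)
  have pD: "p \<gamma> \<in> X \<and> m \<gamma> (i (p \<gamma>)) \<in> W" if "\<gamma> \<in> D" for \<gamma>
    unfolding p_def by (rule theI') (use that uniq in \<open>auto simp: D_def\<close>)
  show thesis
  proof
    show "D \<subseteq> fiber G x" by (auto simp: D_def X_def)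
    show "p ` D \<subseteq> fiber G x" using pD by (auto simp: X_def)
    show "inj_on p D"
    proof (rule inj_onI)
      fix \<gamma> \<delta> assume \<gamma>\<delta>: "\<gamma> \<in> D" "\<delta> \<in> D" "p \<gamma> = p \<delta>"
      show "\<gamma> = \<delta>"
        by (rule mult_inv_in_bisection_eq_left[OF \<open>inj_on d W\<close>, where \<alpha>="p \<gamma>"])
          (use \<gamma>\<delta> pD[of \<gamma>] pD[of \<delta>] in \<open>auto simp: X_def D_def\<close>)
    qed
    show "regrep G h x \<xi> \<gamma> = h (m \<gamma> (i (p \<gamma>))) * \<xi> (p \<gamma>)" if "\<gamma> \<in> D" for \<gamma>
      unfolding regrep_def
    proof (rule infsum_eq_single)
      fix \<alpha> assume "\<alpha> \<in> fiber G x" "\<alpha> \<noteq> p \<gamma>"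
      then have "m \<gamma> (i \<alpha>) \<notin> W" using uniq[of \<gamma> \<alpha> "p \<gamma>"] pD[OF that] that
        unfolding D_def X_def by blast
      then show "h (m \<gamma> (i \<alpha>)) * \<xi> \<alpha> = 0" using hW by simp
    qed (use pD[OF that] in \<open>simp add: X_def\<close>)
    show "regrep G h x \<xi> \<gamma> = 0" if "\<gamma> \<in> fiber G x - D" for \<gamma>
      unfolding regrep_def by (rule infsum_0) (use that hW in \<open>auto simp: D_def X_def\<close>)
  qed
qed

lemma regrep_bisection_bound:
  assumes hW: "\<And>\<gamma>. \<gamma> \<notin> W \<Longrightarrow> h \<gamma> = 0" and injd: "inj_on d W" and injr: "inj_on r W"
    and hM: "\<And>\<gamma>. cmod (h \<gamma>) \<le> M" and \<xi>: "l2 (fiber G x) \<xi>"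
  shows "l2 (fiber G x) (regrep G h x \<xi>)"
    and "l2norm (fiber G x) (regrep G h x \<xi>) \<le> M * l2norm (fiber G x) \<xi>"
proof -
  obtain D p where D: "D \<subseteq> fiber G x" "inj_on p D" "p ` D \<subseteq> fiber G x"
    "\<And>\<gamma>. \<gamma> \<in> D \<Longrightarrow> regrep G h x \<xi> \<gamma> = h (m \<gamma> (i (p \<gamma>))) * \<xi> (p \<gamma>)"
    "\<And>\<gamma>. \<gamma> \<in> fiber G x - D \<Longrightarrow> regrep G h x \<xi> \<gamma> = 0"
    using regrep_bisection[where h=h and x=x and \<xi>=\<xi>, OF hW injd injr] by blast
  define X where "X = fiber G x"
  note D = D[folded X_def]
  have M0: "0 \<le> M" using hM[of undefined] norm_ge_zero order_trans by blast
  define q where "q = (\<lambda>\<alpha>. (cmod (\<xi> \<alpha>))\<^sup>2)"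
  define g where "g = (\<lambda>\<gamma>. (cmod (regrep G h x \<xi> \<gamma>))\<^sup>2)"
  define k where "k \<gamma> = (if \<gamma> \<in> D then M\<^sup>2 * q (p \<gamma>) else 0)" for \<gamma>
  have qX: "q summable_on X" using \<xi> unfolding l2_def q_def X_def .
  have qpD: "q summable_on p ` D" by (rule summable_on_subset_banach[OF qX D(3)])
  have qp: "(q \<circ> p) summable_on D" using summable_on_reindex[OF D(2), of q] qpD by metis
  have kX: "k summable_on X"
    using summable_on_cmult_right[OF qp, of "M\<^sup>2"] D(1)
    by (subst summable_on_cong_neutral[where T=D and g="\<lambda>\<gamma>. M\<^sup>2 * q (p \<gamma>)"]) (auto simp: k_def)
  have gk: "0 \<le> g \<gamma> \<and> g \<gamma> \<le> k \<gamma>" if "\<gamma> \<in> X" for \<gamma>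
  proof (cases "\<gamma> \<in> D")
    case True
    have "g \<gamma> = (cmod (h (m \<gamma> (i (p \<gamma>)))))\<^sup>2 * q (p \<gamma>)"
      by (simp add: g_def D(4)[OF True] q_def norm_mult power_mult_distrib)
    also have "\<dots> \<le> M\<^sup>2 * q (p \<gamma>)"
      by (intro mult_right_mono power_mono hM) (simp_all add: q_def)
    finally show ?thesis using True by (simp add: g_def k_def)
  qed (use D(5) that in \<open>simp add: g_def k_def\<close>)
  have gX: "g summable_on X" by (rule summable_on_comparison_test[OF kX]) (use gk in auto)
  have "infsum g X \<le> infsum k X" by (rule infsum_mono[OF gX kX]) (use gk in auto)
  also have "infsum k X = infsum (\<lambda>\<gamma>. M\<^sup>2 * q (p \<gamma>)) D"
    using D(1) by (intro infsum_cong_neutral) (auto simp: k_def)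
  also have "\<dots> = M\<^sup>2 * infsum q (p ` D)"
    using infsum_cmult_right[OF qp, of "M\<^sup>2"] infsum_reindex[OF D(2), of q] by (simp add: o_def)
  also have "infsum q (p ` D) \<le> infsum q X"
    by (rule infsum_mono_neutral[OF qpD qX]) (use D(3) in \<open>auto simp: q_def\<close>)
  finally have "infsum g X \<le> M\<^sup>2 * infsum q X" by (simp add: mult_left_mono)
  then have "sqrt (infsum g X) \<le> sqrt (M\<^sup>2 * infsum q X)" by simp
  also have "\<dots> = M * sqrt (infsum q X)" using M0 by (simp add: real_sqrt_mult)
  finally show "l2norm (fiber G x) (regrep G h x \<xi>) \<le> M * l2norm (fiber G x) \<xi>"
    by (simp add: l2norm_def g_def q_def X_def)
  show "l2 (fiber G x) (regrep G h x \<xi>)" using gX by (simp add: l2_def X_def g_def)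
qed

lemma opnorm_at_bisection_le:
  assumes hW: "\<And>\<gamma>. \<gamma> \<notin> W \<Longrightarrow> h \<gamma> = 0" and injd: "inj_on d W" and injr: "inj_on r W"
    and hM: "\<And>\<gamma>. cmod (h \<gamma>) \<le> M"
  shows "opnorm_at G h x \<le> M"
    and "bdd_above {l2norm (fiber G x) (regrep G h x \<xi>) | \<xi>.
                      l2 (fiber G x) \<xi> \<and> l2norm (fiber G x) \<xi> \<le> 1}"
proof -
  have M0: "0 \<le> M" using hM[of undefined] norm_ge_zero order_trans by blast
  let ?S = "{l2norm (fiber G x) (regrep G h x \<xi>) | \<xi>.
               l2 (fiber G x) \<xi> \<and> l2norm (fiber G x) \<xi> \<le> 1}"
  have ub: "s \<le> M" if s: "s \<in> ?S" for s
  proof -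
    obtain \<xi> where \<xi>: "s = l2norm (fiber G x) (regrep G h x \<xi>)" "l2 (fiber G x) \<xi>"
      "l2norm (fiber G x) \<xi> \<le> 1" using s by blast
    have "s \<le> M * l2norm (fiber G x) \<xi>" using regrep_bisection_bound(2)[OF hW injd injr hM \<xi>(2)] \<xi>(1) by simp
    also have "\<dots> \<le> M" using mult_left_mono[OF \<xi>(3) M0] by simp
    finally show ?thesis .
  qed
  have "l2norm (fiber G x) (regrep G h x (\<lambda>_. 0)) \<in> ?S"
    by (auto simp: l2_def l2norm_def)
  then show "opnorm_at G h x \<le> M" unfolding opnorm_at_def by (intro cSup_least ub) auto
  show "bdd_above ?S" using ub by (rule bdd_aboveI)
qed

lemma rnorm_bisection_le:
  assumes hW: "\<And>\<gamma>. \<gamma> \<notin> W \<Longrightarrow> h \<gamma> = 0" and injd: "inj_on d W" and injr: "inj_on r W"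
    and hM: "\<And>\<gamma>. cmod (h \<gamma>) \<le> M"
  shows "rnorm G h \<le> M" and "bdd_above (opnorm_at G h ` units G)"
proof -
  note opnorm = opnorm_at_bisection_le(1)[OF hW injd injr hM]
  have "opnorm_at G h ` units G \<noteq> {}" using d_in_units by blast
  then show "rnorm G h \<le> M" unfolding rnorm_def by (rule cSup_least) (use opnorm in auto)
  show "bdd_above (opnorm_at G h ` units G)" by (rule bdd_aboveI2) (rule opnorm)
qed

text \<open>Test \<open>h\<close> against the point mass at \<open>d w\<close>.\<close>
lemma norm_le_rnorm_bisection:
  assumes hW: "\<And>\<gamma>. \<gamma> \<notin> W \<Longrightarrow> h \<gamma> = 0" and injd: "inj_on d W" and injr: "inj_on r W"
    and hM: "\<And>\<gamma>. cmod (h \<gamma>) \<le> M"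
  shows "cmod (h w) \<le> rnorm G h"
proof -
  define x where "x = d w"
  define X where "X = fiber G x"
  define \<xi> where "\<xi> = (\<lambda>\<alpha>. if \<alpha> = x then (1::complex) else 0)"
  have xX: "x \<in> X" and wX: "w \<in> X" by (simp_all add: X_def x_def)
  have "(\<lambda>\<alpha>. (cmod (\<xi> \<alpha>))\<^sup>2) summable_on X \<longleftrightarrow> (\<lambda>\<alpha>. (cmod (\<xi> \<alpha>))\<^sup>2) summable_on {x}"
    by (rule summable_on_cong_neutral) (use xX in \<open>auto simp: \<xi>_def\<close>)
  then have l2\<xi>: "l2 X \<xi>" by (simp add: l2_def)
  have "infsum (\<lambda>\<alpha>. (cmod (\<xi> \<alpha>))\<^sup>2) X = (cmod (\<xi> x))\<^sup>2"
    by (rule infsum_eq_single[OF xX]) (simp add: \<xi>_def)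
  then have norm\<xi>: "l2norm X \<xi> = 1" by (simp add: l2norm_def \<xi>_def)
  have rep: "regrep G h x \<xi> \<gamma> = h \<gamma>" if "\<gamma> \<in> X" for \<gamma>
  proof -
    have "regrep G h x \<xi> \<gamma> = h (m \<gamma> (i x)) * \<xi> x"
      unfolding regrep_def by (rule infsum_eq_single[OF xX[unfolded X_def]]) (simp add: \<xi>_def)
    moreover have "x = d \<gamma>" using that by (simp add: X_def)
    then have "m \<gamma> (i x) = \<gamma>" by simp
    ultimately show ?thesis by (simp add: \<xi>_def)
  qed
  have "l2 X (regrep G h x \<xi>)"
    using regrep_bisection_bound(1)[OF hW injd injr hM l2\<xi>[unfolded X_def]] by (simp add: X_def)
  then have "(cmod (h w))\<^sup>2 \<le> infsum (\<lambda>\<gamma>. (cmod (regrep G h x \<xi> \<gamma>))\<^sup>2) X"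
    using finite_sum_le_infsum[of "\<lambda>\<gamma>. (cmod (regrep G h x \<xi> \<gamma>))\<^sup>2" X "{w}"] rep wX
    by (simp add: l2_def)
  then have "cmod (h w) \<le> l2norm X (regrep G h x \<xi>)"
    unfolding l2norm_def by (simp add: real_le_rsqrt)
  also have "\<dots> \<le> opnorm_at G h x" unfolding opnorm_at_def
    by (rule cSup_upper)
      (use l2\<xi> norm\<xi> opnorm_at_bisection_le(2)[OF hW injd injr hM, where x=x] in \<open>auto simp: X_def\<close>)
  also have "\<dots> \<le> rnorm G h" unfolding rnorm_def
    by (rule cSup_upper) (use rnorm_bisection_le(2)[OF hW injd injr hM] in \<open>auto simp: x_def\<close>)
  finally show ?thesis .
qed

end

section \<open>Etale groupoids\<close>

locale etale = algebraic_groupoid G for G :: "('g::t2_space) groupoid" +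
  assumes etale: "etale_groupoid G"
begin

lemma locally_compact: "locally compact (UNIV :: 'g set)"
  using etale by (simp add: etale_groupoid_def)

lemma continuous_on_i: "continuous_on UNIV i"
  using etale by (simp add: etale_groupoid_def)

lemma continuous_on_m: "continuous_on {(a, b). d a = r b} (\<lambda>(a, b). m a b)"
  using etale by (simp add: etale_groupoid_def)

lemma d_local_homeomorphism: "\<exists>U. open U \<and> \<gamma> \<in> U \<and> open (d ` U) \<and> (\<exists>g. homeomorphism U (d ` U) d g)"
  using etale by (simp add: etale_groupoid_def)

lemma continuous_on_d: "continuous_on UNIV d"
proof -
  have "isCont d \<gamma>" for \<gamma>
  proof -
    obtain U g where U: "open U" "\<gamma> \<in> U" "homeomorphism U (d ` U) d g"
      using d_local_homeomorphism by blast
    then show ?thesis using continuous_on_eq_continuous_at homeomorphism_cont1 by blast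
  qed
  then show ?thesis by (simp add: continuous_at_imp_continuous_on)
qed

lemma continuous_on_r: "continuous_on UNIV r"
proof -
  have "r = d \<circ> i" by (auto simp: fun_eq_iff)
  then show ?thesis using continuous_on_compose[OF continuous_on_i] continuous_on_d
    by (metis continuous_on_subset subset_UNIV)
qed

lemma open_d_image: assumes "open S" shows "open (d ` S)"
proof -
  have "\<exists>T. open T \<and> d \<gamma> \<in> T \<and> T \<subseteq> d ` S" if "\<gamma> \<in> S" for \<gamma>
  proof -
    obtain U g where U: "open U" "\<gamma> \<in> U" "open (d ` U)" "homeomorphism U (d ` U) d g"
      using d_local_homeomorphism by blast
    have "openin (top_of_set U) (S \<inter> U)" unfolding openin_open using assms by blast
    then have "openin (top_of_set (d ` U)) (d ` (S \<inter> U))" by (rule homeomorphism_imp_open_map[OF U(4)])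
    then have "open (d ` (S \<inter> U))" using U(3) openin_open_trans by blast
    then show ?thesis using that U by blast
  qed
  then show ?thesis by (subst open_subopen) blast
qed

lemma d_homeomorphism_on_bisection:
  assumes "open B" "inj_on d B"
  obtains s where "homeomorphism B (d ` B) d s"
proof (rule homeomorphism_injective_open_map[where S=B and f=d])
  show "continuous_on B d" using continuous_on_d continuous_on_subset by blast
  fix U assume U: "openin (top_of_set B) U"
  then have "open (d ` U)" using assms(1) openin_open_trans open_d_image by blast
  moreover have "d ` U \<subseteq> d ` B" using U openin_imp_subset by blast
  ultimately show "openin (top_of_set (d ` B)) (d ` U)" by (simp add: openin_open_eq open_d_image assms)
qed (use assms in auto)

lemma open_inv_image: "open S \<Longrightarrow> open (i ` S)"
  unfolding inv_image_eq_vimage using open_vimage[OF _ continuous_on_i] by simp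

lemma inv_image_open_bisection: "B \<in> open_bisections G \<Longrightarrow> i ` B \<in> open_bisections G"
  unfolding open_bisections_def inj_on_def using open_inv_image by auto

lemma exists_open_bisection: obtains B where "B \<in> open_bisections G" "\<gamma> \<in> B"
proof -
  obtain U1 g1 where U1: "open U1" "\<gamma> \<in> U1" "homeomorphism U1 (d ` U1) d g1"
    using d_local_homeomorphism by blast
  obtain U2 g2 where U2: "open U2" "i \<gamma> \<in> U2" "homeomorphism U2 (d ` U2) d g2"
    using d_local_homeomorphism by blast
  have inj: "inj_on d U1" "inj_on d U2"
    using U1(3) U2(3) homeomorphism_apply1 unfolding inj_on_def by metis+
  define B where "B = U1 \<inter> i -` U2"
  have "open B" unfolding B_def using U1 U2 by (intro open_Int open_vimage continuous_on_i) auto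
  moreover have "inj_on d B" using inj unfolding B_def inj_on_def by auto
  moreover have "inj_on r B" using inj unfolding B_def inj_on_def by auto (metis inv_inv d_inv)
  ultimately show thesis using that U1 U2 unfolding open_bisections_def B_def by blast
qed

lemma C0_on_vanish:
  assumes "a \<in> C0_on G U" "x \<notin> U" shows "a x = 0"
proof -
  obtain f where f: "\<And>n. f n \<in> Cc_on U" "\<And>\<gamma>. (\<lambda>n. f n \<gamma>) \<longlonglongrightarrow> a \<gamma>"
    using assms(1) by (rule C0_onE) (rule that)
  have "(\<lambda>n. f n x) = (\<lambda>n. 0)" using Cc_on_vanish[OF f(1) assms(2)] by simp
  then show ?thesis using LIMSEQ_unique[OF f(2)[of x]] by simp
qed

lemma Cc_on_subset_C0_on: assumes "f \<in> Cc_on U" shows "f \<in> C0_on G U"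
proof (rule C0_onI[of "\<lambda>n. f"])
  have "rnorm G (\<lambda>\<gamma>. f \<gamma> - f \<gamma>) \<le> 0"
    by (rule rnorm_bisection_le(1)[where W="{}"]) auto
  then show "rcauchy G (\<lambda>n. f)" unfolding rcauchy_def by (meson le_less_trans)
qed (use assms in simp_all)

lemma norm_diff_le_rnorm:
  assumes "B \<in> open_bisections G" "f \<in> Cc_on B" "g \<in> Cc_on B"
  shows "cmod (f x - g x) \<le> rnorm G (\<lambda>\<gamma>. f \<gamma> - g \<gamma>)"
proof -
  obtain M1 M2 where M: "\<And>x. cmod (f x) \<le> M1" "\<And>x. cmod (g x) \<le> M2"
    using Cc_on_bounded[OF assms(2)] Cc_on_bounded[OF assms(3)] by blast
  show ?thesis
  proof (rule norm_le_rnorm_bisection[where W=B and M="M1 + M2"])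
    show "\<And>\<gamma>. \<gamma> \<notin> B \<Longrightarrow> f \<gamma> - g \<gamma> = 0"
      by (simp add: Cc_on_vanish[OF assms(2)] Cc_on_vanish[OF assms(3)])
    show "cmod (f \<gamma> - g \<gamma>) \<le> M1 + M2" for \<gamma>
      using norm_triangle_ineq4[of "f \<gamma>" "g \<gamma>"] M[of \<gamma>] by linarith
  qed (use open_bisectionsD[OF assms(1)] in auto)
qed

lemma rnorm_diff_nonneg:
  "B \<in> open_bisections G \<Longrightarrow> f \<in> Cc_on B \<Longrightarrow> g \<in> Cc_on B \<Longrightarrow> 0 \<le> rnorm G (\<lambda>\<gamma>. f \<gamma> - g \<gamma>)"
  using norm_diff_le_rnorm norm_ge_zero order_trans by blast

lemma rcauchy_uniform_limit:
  assumes "B \<in> open_bisections G" "\<And>n. f n \<in> Cc_on B" "rcauchy G f"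
    "\<And>\<gamma>. (\<lambda>n. f n \<gamma>) \<longlonglongrightarrow> a \<gamma>"
  shows "uniform_limit UNIV f a sequentially"
proof (rule uniform_limitI)
  fix e :: real assume "e > 0"
  then obtain N where N: "\<forall>m\<ge>N. \<forall>n\<ge>N. rnorm G (\<lambda>\<gamma>. f m \<gamma> - f n \<gamma>) < e / 2"
    using assms(3) unfolding rcauchy_def by (meson half_gt_zero)
  have close: "cmod (f n x - a x) \<le> e / 2" if "n \<ge> N" for n x
  proof (rule LIMSEQ_le_const2)
    show "(\<lambda>k. cmod (f n x - f k x)) \<longlonglongrightarrow> cmod (f n x - a x)"
      by (intro tendsto_intros assms(4))
    have "cmod (f n x - f k x) \<le> e / 2" if "k \<ge> N" for k
      using norm_diff_le_rnorm[OF assms(1) assms(2)[of n] assms(2)[of k], of x] N \<open>n \<ge> N\<close> that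
      by fastforce
    then show "\<exists>N. \<forall>k\<ge>N. cmod (f n x - f k x) \<le> e / 2" by blast
  qed
  show "\<forall>\<^sub>F n in sequentially. \<forall>x\<in>UNIV. dist (f n x) (a x) < e"
    unfolding eventually_sequentially dist_norm
  proof (intro exI[of _ N] allI impI ballI)
    fix n x assume "N \<le> n"
    then show "cmod (f n x - a x) < e" using close[of n x] \<open>e > 0\<close> by linarith
  qed
qed

lemma C0_on_continuous:
  assumes "B \<in> open_bisections G" "a \<in> C0_on G B" shows "continuous_on UNIV a"
proof -
  obtain f where f: "\<And>n. f n \<in> Cc_on B" "rcauchy G f" "\<And>\<gamma>. (\<lambda>n. f n \<gamma>) \<longlonglongrightarrow> a \<gamma>"
    using assms(2) by (rule C0_onE) (rule that)
  show ?thesis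
  proof (rule uniform_limit_theorem)
    show "\<forall>\<^sub>F n in sequentially. continuous_on UNIV (f n)" using f(1) by (simp add: Cc_on_def)
  qed (use rcauchy_uniform_limit[OF assms(1) f] in simp_all)
qed

lemma rcauchy_bounded:
  assumes "B \<in> open_bisections G" "\<And>n. f n \<in> Cc_on B" "rcauchy G f"
  obtains M where "\<And>n x. cmod (f n x) \<le> M"
proof -
  obtain N where N: "\<forall>m\<ge>N. \<forall>n\<ge>N. rnorm G (\<lambda>\<gamma>. f m \<gamma> - f n \<gamma>) < 1"
    using assms(3) unfolding rcauchy_def by (meson zero_less_one)
  have "\<forall>n. \<exists>M. \<forall>x. cmod (f n x) \<le> M" using Cc_on_bounded[OF assms(2)] by blast
  then obtain M where M: "\<And>n x. cmod (f n x) \<le> M n" by metis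
  have M_le: "M n \<le> Max (M ` {..N})" if "n \<le> N" for n
    using that by (intro Max_ge) auto
  have "cmod (f n x) \<le> Max (M ` {..N}) + 1" for n x
  proof (cases "n \<le> N")
    case True
    then show ?thesis using M[of n x] M_le[OF True] by linarith
  next
    case False
    have "cmod (f n x - f N x) \<le> rnorm G (\<lambda>\<gamma>. f n \<gamma> - f N \<gamma>)"
      by (rule norm_diff_le_rnorm[OF assms(1) assms(2) assms(2)])
    also have "\<dots> < 1" using N False by auto
    finally show ?thesis
      using norm_triangle_ineq2[of "f n x" "f N x"] M[of N x] M_le[of N] by linarith
  qed
  then show thesis using that by blast
qed

lemma C0_on_mult_left:
  assumes B: "B \<in> open_bisections G" and a: "a \<in> C0_on G B"
    and q: "continuous_on UNIV q" "\<And>x. cmod (q x) \<le> K" and sub: "B \<inter> closure {x. q x \<noteq> 0} \<subseteq> B'"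
  shows "(\<lambda>\<gamma>. q \<gamma> * a \<gamma>) \<in> C0_on G B'"
proof -
  obtain f where f: "\<And>n. f n \<in> Cc_on B" "rcauchy G f" "\<And>\<gamma>. (\<lambda>n. f n \<gamma>) \<longlonglongrightarrow> a \<gamma>"
    using a by (rule C0_onE) (rule that)
  have K0: "0 \<le> K" using q(2) norm_ge_zero order_trans by blast
  show ?thesis
  proof (rule C0_onI)
    show "(\<lambda>\<gamma>. q \<gamma> * f n \<gamma>) \<in> Cc_on B'" for n by (rule Cc_on_mult_left[OF f(1) q(1) sub])
    show "(\<lambda>n. q \<gamma> * f n \<gamma>) \<longlonglongrightarrow> q \<gamma> * a \<gamma>" for \<gamma> by (intro tendsto_mult_left f(3))
    show "rcauchy G (\<lambda>n \<gamma>. q \<gamma> * f n \<gamma>)"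
    proof (rule rcauchy_dominated[OF f(2) f(2) K0])
      fix m n
      let ?rf = "rnorm G (\<lambda>\<gamma>. f m \<gamma> - f n \<gamma>)"
      have "rnorm G (\<lambda>\<gamma>. q \<gamma> * f m \<gamma> - q \<gamma> * f n \<gamma>) \<le> K * ?rf"
      proof (rule rnorm_bisection_le(1)[where W=B])
        show "\<And>\<gamma>. \<gamma> \<notin> B \<Longrightarrow> q \<gamma> * f m \<gamma> - q \<gamma> * f n \<gamma> = 0"
          by (simp add: Cc_on_vanish[OF f(1)])
        show "cmod (q \<gamma> * f m \<gamma> - q \<gamma> * f n \<gamma>) \<le> K * ?rf" for \<gamma>
          unfolding right_diff_distrib[symmetric] norm_mult
          by (intro mult_mono q(2) norm_diff_le_rnorm[OF B f(1)[of m] f(1)[of n]] K0) simp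
      qed (use open_bisectionsD[OF B] in auto)
      then show "rnorm G (\<lambda>\<gamma>. q \<gamma> * f m \<gamma> - q \<gamma> * f n \<gamma>) \<le> K * max ?rf ?rf" by simp
    qed
  qed
qed

lemma Cc_on_invol: assumes "f \<in> Cc_on B" shows "invol G f \<in> Cc_on (i ` B)"
proof (rule Cc_onI)
  show "compact (i ` closure {x. f x \<noteq> 0})"
    using assms compact_continuous_image continuous_on_subset[OF continuous_on_i]
    unfolding Cc_on_def by blast
  show "{x. invol G f x \<noteq> 0} \<subseteq> i ` closure {x. f x \<noteq> 0}"
    using closure_subset by (force simp: invol_def image_iff intro: exI[of _ "i _"])
  show "i ` closure {x. f x \<noteq> 0} \<subseteq> i ` B" using assms by (auto simp: Cc_on_def)
  show "continuous_on UNIV (invol G f)" unfolding invol_def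
    using assms by (intro continuous_intros continuous_on_compose2[OF _ continuous_on_i]) (auto simp: Cc_on_def)
qed

lemma C0_on_invol:
  assumes B: "B \<in> open_bisections G" and a: "a \<in> C0_on G B"
  shows "invol G a \<in> C0_on G (i ` B)"
proof -
  obtain f where f: "\<And>n. f n \<in> Cc_on B" "rcauchy G f" "\<And>\<gamma>. (\<lambda>n. f n \<gamma>) \<longlonglongrightarrow> a \<gamma>"
    using a by (rule C0_onE) (rule that)
  show ?thesis
  proof (rule C0_onI)
    show "invol G (f n) \<in> Cc_on (i ` B)" for n by (rule Cc_on_invol[OF f(1)])
    show "(\<lambda>n. invol G (f n) \<gamma>) \<longlonglongrightarrow> invol G a \<gamma>" for \<gamma>
      unfolding invol_def by (intro tendsto_cnj f(3))
    show "rcauchy G (\<lambda>n. invol G (f n))"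
    proof (rule rcauchy_dominated[OF f(2) f(2), where K=1])
      fix m n
      let ?rf = "rnorm G (\<lambda>\<gamma>. f m \<gamma> - f n \<gamma>)"
      have "rnorm G (\<lambda>\<gamma>. invol G (f m) \<gamma> - invol G (f n) \<gamma>) \<le> ?rf"
      proof (rule rnorm_bisection_le(1)[where W="i ` B"])
        show "invol G (f m) \<gamma> - invol G (f n) \<gamma> = 0" if "\<gamma> \<notin> i ` B" for \<gamma>
          using that Cc_on_vanish[OF Cc_on_invol[OF f(1)]] by simp
        show "cmod (invol G (f m) \<gamma> - invol G (f n) \<gamma>) \<le> ?rf" for \<gamma>
          using norm_diff_le_rnorm[OF B f(1)[of m] f(1)[of n], of "i \<gamma>"]
          by (simp add: invol_def flip: complex_cnj_diff)
      qed (use open_bisectionsD[OF inv_image_open_bisection[OF B]] in auto)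
      then show "rnorm G (\<lambda>\<gamma>. invol G (f m) \<gamma> - invol G (f n) \<gamma>) \<le> 1 * max ?rf ?rf" by simp
    qed simp
  qed
qed

text \<open>Writing \<open>s\<close> for the inverse of \<open>d\<close> on the bisection \<open>W\<close>, an arrow \<open>\<gamma>\<close> with \<open>d \<gamma> \<in> d ` W\<close>
  factors uniquely as \<open>\<gamma> = m (m \<gamma> (i (s (d \<gamma>)))) (s (d \<gamma>))\<close> with right factor in \<open>W\<close>.\<close>
lemma bis_prod_eq_vimage:
  assumes W: "W \<in> open_bisections G" and s: "homeomorphism W (d ` W) d s"
  shows "bis_prod G U W = d -` d ` W \<inter> (\<lambda>\<gamma>. m \<gamma> (i (s (d \<gamma>)))) -` U"
proof
  show "bis_prod G U W \<subseteq> d -` d ` W \<inter> (\<lambda>\<gamma>. m \<gamma> (i (s (d \<gamma>)))) -` U"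
  proof
    fix \<gamma> assume "\<gamma> \<in> bis_prod G U W"
    then obtain a b where ab: "a \<in> U" "b \<in> W" "d a = r b" "\<gamma> = m a b"
      unfolding bis_prod_def by blast
    then have "s (d \<gamma>) = b" using homeomorphism_apply1[OF s] by simp
    then show "\<gamma> \<in> d -` d ` W \<inter> (\<lambda>\<gamma>. m \<gamma> (i (s (d \<gamma>)))) -` U"
      using ab by (auto simp: mult_mult_inv)
  qed
  show "d -` d ` W \<inter> (\<lambda>\<gamma>. m \<gamma> (i (s (d \<gamma>)))) -` U \<subseteq> bis_prod G U W"
  proof
    fix \<gamma> assume \<gamma>: "\<gamma> \<in> d -` d ` W \<inter> (\<lambda>\<gamma>. m \<gamma> (i (s (d \<gamma>)))) -` U"
    define b where "b = s (d \<gamma>)"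
    have b: "b \<in> W" "d b = d \<gamma>"
      using \<gamma> homeomorphism_apply2[OF s] homeomorphism_image2[OF s] unfolding b_def by auto
    then have "m (m \<gamma> (i b)) b = \<gamma>" "d (m \<gamma> (i b)) = r b" by (simp_all add: mult_inv_mult)
    then show "\<gamma> \<in> bis_prod G U W"
      unfolding bis_prod_def using \<gamma> b by (force simp: b_def)
  qed
qed

lemma continuous_on_mult_inv_section:
  assumes "homeomorphism W (d ` W) d s"
  shows "continuous_on (d -` d ` W) (\<lambda>\<gamma>. m \<gamma> (i (s (d \<gamma>))))"
proof -
  have "continuous_on (d -` d ` W) (\<lambda>\<gamma>. i (s (d \<gamma>)))"
    by (intro continuous_on_compose2[OF continuous_on_i] continuous_on_compose2[OF homeomorphism_cont2[OF assms]]
        continuous_on_subset[OF continuous_on_d]) auto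
  then have "continuous_on (d -` d ` W) (\<lambda>\<gamma>. (\<gamma>, i (s (d \<gamma>))))"
    by (intro continuous_on_Pair continuous_on_id)
  moreover have "(\<lambda>\<gamma>. (\<gamma>, i (s (d \<gamma>)))) ` (d -` d ` W) \<subseteq> {(a, b). d a = r b}"
    using homeomorphism_apply2[OF assms] by auto
  ultimately have "continuous_on (d -` d ` W) ((\<lambda>(a, b). m a b) \<circ> (\<lambda>\<gamma>. (\<gamma>, i (s (d \<gamma>)))))"
    by (intro continuous_on_compose continuous_on_subset[OF continuous_on_m])
  then show ?thesis by (simp add: o_def)
qed

lemma open_vimage_d_image: "open W \<Longrightarrow> open (d -` d ` W)"
  using open_d_image continuous_on_d open_vimage by blast

lemma bis_prod_open_bisection:
  assumes U: "U \<in> open_bisections G" and W: "W \<in> open_bisections G"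
  shows "bis_prod G U W \<in> open_bisections G"
proof -
  note U' = open_bisectionsD[OF U] and W' = open_bisectionsD[OF W]
  obtain s where s: "homeomorphism W (d ` W) d s" using d_homeomorphism_on_bisection W' by blast
  have "open ((\<lambda>\<gamma>. m \<gamma> (i (s (d \<gamma>)))) -` U \<inter> d -` d ` W)"
    using continuous_on_open_vimage[OF open_vimage_d_image[OF W'(1)]]
      continuous_on_mult_inv_section[OF s] U'(1) by blast
  then have "open (bis_prod G U W)" unfolding bis_prod_eq_vimage[OF W s] by (simp add: Int_commute)
  moreover have "inj_on d (bis_prod G U W)" "inj_on r (bis_prod G U W)"
    using U'(2,3) W'(2,3) unfolding bis_prod_def inj_on_def
    by (smt (verit) mem_Collect_eq d_mult r_mult)+
  ultimately show ?thesis by (simp add: open_bisections_def)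
qed

lemma conv_eq_on_bisection:
  assumes W: "W \<in> open_bisections G" and s: "homeomorphism W (d ` W) d s"
    and b: "\<And>x. x \<notin> W \<Longrightarrow> b x = 0"
  shows "conv G a b \<gamma> = (if \<gamma> \<in> d -` d ` W then a (m \<gamma> (i (s (d \<gamma>)))) * b (s (d \<gamma>)) else 0)"
proof (cases "\<gamma> \<in> d -` d ` W")
  case True
  then have "s (d \<gamma>) \<in> W" "d (s (d \<gamma>)) = d \<gamma>"
    using homeomorphism_apply2[OF s] homeomorphism_image2[OF s] by auto
  then show ?thesis using True conv_bisection[where b=b and B=W, OF b open_bisectionsD(2)[OF W]] by simp
next
  case False
  then have "\<not> (\<exists>\<beta>\<in>W. d \<beta> = d \<gamma>)" by (metis image_eqI vimageI)
  then show ?thesis using False conv_bisection_outside[where b=b and B=W, OF b] by simp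
qed

lemma closed_composable: "closed {(x, y). d x = r y}"
proof -
  have "continuous_on UNIV (\<lambda>p. d (fst p))" "continuous_on UNIV (\<lambda>p. r (snd p))"
    by (intro continuous_on_compose2[OF continuous_on_d] continuous_on_compose2[OF continuous_on_r]
        continuous_intros; simp)+
  then have "closed {p. d (fst p) = r (snd p)}" by (rule closed_Collect_eq)
  moreover have "{(x, y). d x = r y} = {p. d (fst p) = r (snd p)}" by auto
  ultimately show ?thesis by simp
qed

lemma Cc_on_conv:
  assumes U: "U \<in> open_bisections G" and W: "W \<in> open_bisections G"
    and f: "f \<in> Cc_on U" and g: "g \<in> Cc_on W" and s: "homeomorphism W (d ` W) d s"
  shows "conv G f g \<in> Cc_on (bis_prod G U W)"
proof -
  define D where "D = d -` d ` W"
  define q where "q \<gamma> = m \<gamma> (i (s (d \<gamma>)))" for \<gamma>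
  have conv_eq: "conv G f g \<gamma> = (if \<gamma> \<in> D then f (q \<gamma>) * g (s (d \<gamma>)) else 0)" for \<gamma>
    unfolding D_def q_def by (rule conv_eq_on_bisection[OF W s Cc_on_vanish[OF g]])
  define P where "P = (closure {x. f x \<noteq> 0} \<times> closure {x. g x \<noteq> 0}) \<inter> {(x, y). d x = r y}"
  define K where "K = (\<lambda>(x, y). m x y) ` P"
  have "compact P"
    unfolding P_def using f g by (intro compact_Int_closed compact_Times closed_composable) (auto simp: Cc_on_def)
  have K: "compact K"
    unfolding K_def by (rule compact_continuous_image[OF continuous_on_subset[OF continuous_on_m] \<open>compact P\<close>])
      (auto simp: P_def)
  have K_sub: "K \<subseteq> bis_prod G U W"
    using f g unfolding K_def P_def bis_prod_def Cc_on_def by fastforce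
  also have "\<dots> \<subseteq> D" unfolding bis_prod_eq_vimage[OF W s] D_def by blast
  finally have KD: "K \<subseteq> D" .
  have supp: "{x. conv G f g x \<noteq> 0} \<subseteq> K"
  proof
    fix \<gamma> assume "\<gamma> \<in> {x. conv G f g x \<noteq> 0}"
    then have \<gamma>: "\<gamma> \<in> D" "f (q \<gamma>) \<noteq> 0" "g (s (d \<gamma>)) \<noteq> 0" by (auto simp: conv_eq split: if_splits)
    have "d (s (d \<gamma>)) = d \<gamma>" using \<gamma>(1) homeomorphism_apply2[OF s] by (simp add: D_def)
    then have "(q \<gamma>, s (d \<gamma>)) \<in> P" "m (q \<gamma>) (s (d \<gamma>)) = \<gamma>"
      using \<gamma>(2,3) by (auto simp: P_def q_def mult_inv_mult intro: closure_subset[THEN subsetD])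
    then show "\<gamma> \<in> K" unfolding K_def by force
  qed
  show ?thesis
  proof (rule Cc_onI[OF _ K supp K_sub])
    have "continuous_on D (\<lambda>\<gamma>. f (q \<gamma>) * g (s (d \<gamma>)))"
    proof (intro continuous_on_mult)
      show "continuous_on D (\<lambda>\<gamma>. f (q \<gamma>))"
        using continuous_on_compose2[OF _ continuous_on_mult_inv_section[OF s]] f
        unfolding D_def q_def Cc_on_def by blast
      show "continuous_on D (\<lambda>\<gamma>. g (s (d \<gamma>)))" unfolding D_def
        using g by (intro continuous_on_compose2[OF _ continuous_on_compose2[OF homeomorphism_cont2[OF s]
            continuous_on_subset[OF continuous_on_d]]]) (auto simp: Cc_on_def)
    qed
    then have "continuous_on D (conv G f g)" by (rule continuous_on_cong[THEN iffD1, rotated 2]) (auto simp: conv_eq)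
    then show "continuous_on UNIV (conv G f g)"
      by (rule continuous_on_zero_outside[OF _ _ compact_imp_closed[OF K] KD, rotated])
        (use supp open_vimage_d_image[OF open_bisectionsD(1)[OF W]] in \<open>auto simp: D_def\<close>)
  qed
qed

lemma rnorm_conv_diff_le:
  assumes U: "U \<in> open_bisections G" and W: "W \<in> open_bisections G"
    and f: "f \<in> Cc_on U" "f' \<in> Cc_on U" and g: "g \<in> Cc_on W" "g' \<in> Cc_on W"
    and K: "\<And>x. cmod (f' x) \<le> K" "\<And>x. cmod (g x) \<le> K"
  shows "rnorm G (\<lambda>\<gamma>. conv G f g \<gamma> - conv G f' g' \<gamma>)
           \<le> K * (rnorm G (\<lambda>\<gamma>. f \<gamma> - f' \<gamma>) + rnorm G (\<lambda>\<gamma>. g \<gamma> - g' \<gamma>))"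
proof -
  obtain s where s: "homeomorphism W (d ` W) d s"
    using d_homeomorphism_on_bisection open_bisectionsD[OF W] by blast
  let ?rf = "rnorm G (\<lambda>\<gamma>. f \<gamma> - f' \<gamma>)" and ?rg = "rnorm G (\<lambda>\<gamma>. g \<gamma> - g' \<gamma>)"
  have rf: "cmod (f x - f' x) \<le> ?rf" and rg: "cmod (g x - g' x) \<le> ?rg" for x
    using norm_diff_le_rnorm[OF U f] norm_diff_le_rnorm[OF W g] by auto
  have rf0: "0 \<le> ?rf" and rg0: "0 \<le> ?rg" and K0: "0 \<le> K"
    using rnorm_diff_nonneg[OF U f] rnorm_diff_nonneg[OF W g] K(1) norm_ge_zero order_trans by blast+
  have conv_eq: "conv G a b \<gamma> = (if \<gamma> \<in> d -` d ` W then a (m \<gamma> (i (s (d \<gamma>)))) * b (s (d \<gamma>)) else 0)"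
    if "b \<in> Cc_on W" for a b \<gamma>
    by (rule conv_eq_on_bisection[OF W s Cc_on_vanish[OF that]])
  show ?thesis
  proof (rule rnorm_bisection_le(1)[where W="bis_prod G U W"])
    show "\<And>\<gamma>. \<gamma> \<notin> bis_prod G U W \<Longrightarrow> conv G f g \<gamma> - conv G f' g' \<gamma> = 0"
      using Cc_on_vanish[OF Cc_on_conv[OF U W f(1) g(1) s]] Cc_on_vanish[OF Cc_on_conv[OF U W f(2) g(2) s]]
      by simp
    fix \<gamma>
    show "cmod (conv G f g \<gamma> - conv G f' g' \<gamma>) \<le> K * (?rf + ?rg)"
    proof (cases "\<gamma> \<in> d -` d ` W")
      case True
      let ?x = "m \<gamma> (i (s (d \<gamma>)))" and ?y = "s (d \<gamma>)"
      have "conv G f g \<gamma> - conv G f' g' \<gamma> = (f ?x - f' ?x) * g ?y + f' ?x * (g ?y - g' ?y)"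
        using True g by (simp add: conv_eq algebra_simps)
      then have "cmod (conv G f g \<gamma> - conv G f' g' \<gamma>)
            \<le> cmod (f ?x - f' ?x) * cmod (g ?y) + cmod (f' ?x) * cmod (g ?y - g' ?y)"
        by (metis norm_mult norm_triangle_ineq)
      also have "\<dots> \<le> ?rf * K + K * ?rg"
        by (intro add_mono mult_mono rf rg rf0 rg0 K K0 norm_ge_zero)
      finally show ?thesis by (simp add: algebra_simps)
    next
      case False
      then show ?thesis using g rf0 rg0 K0 by (simp add: conv_eq)
    qed
  qed (use open_bisectionsD[OF bis_prod_open_bisection[OF U W]] in auto)
qed

lemma C0_on_conv:
  assumes U: "U \<in> open_bisections G" and W: "W \<in> open_bisections G"
    and a: "a \<in> C0_on G U" and b: "b \<in> C0_on G W"
  shows "conv G a b \<in> C0_on G (bis_prod G U W)"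
proof -
  obtain s where s: "homeomorphism W (d ` W) d s"
    using d_homeomorphism_on_bisection open_bisectionsD[OF W] by blast
  obtain f where f: "\<And>n. f n \<in> Cc_on U" "rcauchy G f" "\<And>\<gamma>. (\<lambda>n. f n \<gamma>) \<longlonglongrightarrow> a \<gamma>"
    using a by (rule C0_onE) (rule that)
  obtain g where g: "\<And>n. g n \<in> Cc_on W" "rcauchy G g" "\<And>\<gamma>. (\<lambda>n. g n \<gamma>) \<longlonglongrightarrow> b \<gamma>"
    using b by (rule C0_onE) (rule that)
  obtain Mf where Mf: "\<And>n x. cmod (f n x) \<le> Mf" by (rule rcauchy_bounded[OF U f(1,2)]) (rule that)
  obtain Mg where Mg: "\<And>n x. cmod (g n x) \<le> Mg" by (rule rcauchy_bounded[OF W g(1,2)]) (rule that)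
  define K where "K = max Mf Mg"
  have K: "cmod (f n x) \<le> K" "cmod (g n x) \<le> K" for n x
    using Mf Mg unfolding K_def by (meson max.coboundedI1 max.coboundedI2 order_trans)+
  then have K0: "0 \<le> K" using norm_ge_zero order_trans by blast
  show ?thesis
  proof (rule C0_onI)
    show "conv G (f n) (g n) \<in> Cc_on (bis_prod G U W)" for n by (rule Cc_on_conv[OF U W f(1) g(1) s])
    show "(\<lambda>n. conv G (f n) (g n) \<gamma>) \<longlonglongrightarrow> conv G a b \<gamma>" for \<gamma>
    proof -
      have "conv G (f n) (g n) \<gamma> = (if \<gamma> \<in> d -` d ` W then f n (m \<gamma> (i (s (d \<gamma>)))) * g n (s (d \<gamma>)) else 0)"
        for n by (rule conv_eq_on_bisection[OF W s Cc_on_vanish[OF g(1)]])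
      moreover have "conv G a b \<gamma> = (if \<gamma> \<in> d -` d ` W then a (m \<gamma> (i (s (d \<gamma>)))) * b (s (d \<gamma>)) else 0)"
        by (rule conv_eq_on_bisection[OF W s C0_on_vanish[OF b]])
      ultimately show ?thesis using f(3) g(3) by (auto intro: tendsto_mult)
    qed
    show "rcauchy G (\<lambda>n. conv G (f n) (g n))"
    proof (rule rcauchy_dominated[OF f(2) g(2), where K="2 * K"])
      fix p q
      let ?rf = "rnorm G (\<lambda>\<gamma>. f p \<gamma> - f q \<gamma>)" and ?rg = "rnorm G (\<lambda>\<gamma>. g p \<gamma> - g q \<gamma>)"
      have "rnorm G (\<lambda>\<gamma>. conv G (f p) (g p) \<gamma> - conv G (f q) (g q) \<gamma>) \<le> K * (?rf + ?rg)"
        by (rule rnorm_conv_diff_le[OF U W f(1) f(1) g(1) g(1) K(1) K(2)])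
      also have "\<dots> \<le> K * (2 * max ?rf ?rg)" using K0 by (intro mult_left_mono) auto
      finally show "rnorm G (\<lambda>\<gamma>. conv G (f p) (g p) \<gamma> - conv G (f q) (g q) \<gamma>) \<le> 2 * K * max ?rf ?rg"
        by simp
    qed (use K0 in simp)
  qed
qed

lemma exists_C0_on_bisection_one:
  obtains B n where "B \<in> open_bisections G" "\<alpha> \<in> B" "n \<in> C0_on G B" "n \<alpha> = 1"
    "continuous_on UNIV n"
proof -
  obtain B where B: "B \<in> open_bisections G" "\<alpha> \<in> B" by (rule exists_open_bisection)
  obtain n where n: "n \<in> Cc_on B" "n \<alpha> = 1" "\<And>x. cmod (n x) \<le> 1"
    by (rule exists_Cc_bump[OF locally_compact open_bisectionsD(1)[OF B(1)] B(2)]) (rule that)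
  have "continuous_on UNIV n" using n(1) by (simp add: Cc_on_def)
  then show thesis using that B Cc_on_subset_C0_on[OF n(1)] n(2) by blast
qed

lemma exists_Cc_on_units_bump:
  assumes "u \<in> units G" "closed C" "u \<notin> C"
  obtains f where "f \<in> Cc_on (units G)" "f u = 1" "\<And>x. x \<in> C \<Longrightarrow> f x = 0"
proof -
  obtain B where B: "B \<in> open_bisections G" "u \<in> B" by (rule exists_open_bisection)
  have "open (d ` B - C)" using open_d_image[OF open_bisectionsD(1)[OF B(1)]] assms(2) by blast
  moreover have "u \<in> d ` B - C" using assms B(2) unit_iff_d_eq by force
  ultimately obtain f where f: "f \<in> Cc_on (d ` B - C)" "f u = 1" "\<And>x. cmod (f x) \<le> 1"
    by (rule exists_Cc_bump[OF locally_compact]) (rule that)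
  have "f \<in> Cc_on (units G)" by (rule Cc_on_mono[OF f(1)]) auto
  moreover have "f x = 0" if "x \<in> C" for x using that by (intro Cc_on_vanish[OF f(1)]) blast
  ultimately show thesis using that f(2) by blast
qed

text \<open>A bump \<open>f\<close> on the units near \<open>d \<alpha>\<close> cuts the bisection \<open>i ` W \<cdot> U\<close> down to units, since an
  arrow \<open>i w \<cdot> u\<close> with range in \<open>d ` (U \<inter> W)\<close> has \<open>w = u\<close>.\<close>
lemma C0_on_units_conv_bump:
  assumes U: "U \<in> open_bisections G" and W: "W \<in> open_bisections G"
    and k: "k \<in> C0_on G (bis_prod G (i ` W) U)"
    and f: "f \<in> Cc_on (d ` (U \<inter> W))" "\<And>x. cmod (f x) \<le> 1"
  shows "conv G f k \<in> C0_on G (units G)"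
proof -
  have f_vanish: "f x = 0" if "x \<notin> units G" for x
  proof -
    have "x \<notin> d ` (U \<inter> W)" using that by auto
    then show ?thesis by (rule Cc_on_vanish[OF f(1)])
  qed
  have "conv G f k = (\<lambda>\<gamma>. f (r \<gamma>) * k \<gamma>)"
    using conv_units_left[where f=f, OF f_vanish] by (simp add: fun_eq_iff)
  moreover have "(\<lambda>\<gamma>. f (r \<gamma>) * k \<gamma>) \<in> C0_on G (units G)"
  proof (rule C0_on_mult_left[OF bis_prod_open_bisection[OF inv_image_open_bisection[OF W] U] k])
    have fc: "continuous_on UNIV f" using f(1) by (simp add: Cc_on_def)
    then show "continuous_on UNIV (\<lambda>\<gamma>. f (r \<gamma>))"
      by (rule continuous_on_compose2[OF _ continuous_on_r]) simp
    show "cmod (f (r x)) \<le> 1" for x by (rule f(2))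
    have "closed (r -` closure {x. f x \<noteq> 0})"
      using continuous_on_r closed_closure by (simp add: continuous_on_closed_vimage)
    moreover have "{\<gamma>. f (r \<gamma>) \<noteq> 0} \<subseteq> r -` closure {x. f x \<noteq> 0}"
      using closure_subset by fastforce
    ultimately have "closure {\<gamma>. f (r \<gamma>) \<noteq> 0} \<subseteq> r -` closure {x. f x \<noteq> 0}"
      by (simp add: closure_minimal)
    also have "\<dots> \<subseteq> r -` d ` (U \<inter> W)" using f(1) unfolding Cc_on_def by blast
    finally have "closure {\<gamma>. f (r \<gamma>) \<noteq> 0} \<subseteq> r -` d ` (U \<inter> W)" .
    then show "bis_prod G (i ` W) U \<inter> closure {\<gamma>. f (r \<gamma>) \<noteq> 0} \<subseteq> units G"
      using bis_prod_inv_in_units[OF open_bisectionsD(2)[OF W] open_bisectionsD(3)[OF U]] by blast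
  qed
  ultimately show ?thesis by simp
qed

end

section \<open>The character\<close>

locale reduced_algebra_hom =
  G: etale G + H: etale H
  for G :: "('g::t2_space) groupoid" and H :: "('h::t2_space) groupoid" +
  fixes \<phi> :: "('g \<Rightarrow> complex) \<Rightarrow> ('h \<Rightarrow> complex)"
    and F :: "'g set" and \<psi> :: "'g set \<Rightarrow> 'h set"
    and \<sigma> :: "'g \<Rightarrow> 'h" and V :: "'h set" and \<Phi> :: "'g \<Rightarrow> 'h"
  assumes star_hom: "star_hom G H \<phi>"
    and psi_open_bisection: "U \<in> open_bisections G \<Longrightarrow> \<psi> U \<in> open_bisections H"
    and phi_C0_on: "U \<in> open_bisections G \<Longrightarrow> a \<in> C0_on G U \<Longrightarrow> \<phi> a \<in> C0_on H (\<psi> U)"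
    and psi_bis_prod: "U \<in> open_bisections G \<Longrightarrow> W \<in> open_bisections G \<Longrightarrow>
                         \<psi> (bis_prod G U W) = bis_prod H (\<psi> U) (\<psi> W)"
    and V_units: "V \<subseteq> units H"
    and sigma_continuous: "continuous_on F \<sigma>" and sigma_image: "\<sigma> ` F = V"
    and phi_units: "a \<in> C0_on G (units G) \<Longrightarrow> \<phi> a \<in> C0_on H V"
    and phi_sigma: "a \<in> C0_on G (units G) \<Longrightarrow> x \<in> F \<Longrightarrow> \<phi> a (\<sigma> x) = a x"
    and Phi_mem: "gsrc G \<alpha> \<in> F \<Longrightarrow> U \<in> open_bisections G \<Longrightarrow> \<alpha> \<in> U \<Longrightarrow> \<Phi> \<alpha> \<in> \<psi> U"
    and d_Phi: "gsrc G \<alpha> \<in> F \<Longrightarrow> U \<in> open_bisections G \<Longrightarrow> \<alpha> \<in> U \<Longrightarrow> gsrc H (\<Phi> \<alpha>) = \<sigma> (gsrc G \<alpha>)"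
begin

lemma phi_conv: "a \<in> C0_on G U \<Longrightarrow> b \<in> C0_on G W \<Longrightarrow> \<phi> (conv G a b) = conv H (\<phi> a) (\<phi> b)"
  using star_hom C0_on_subset_Cr unfolding star_hom_def by blast

lemma phi_invol: "a \<in> C0_on G U \<Longrightarrow> \<phi> (invol G a) = invol H (\<phi> a)"
  using star_hom C0_on_subset_Cr unfolding star_hom_def by blast

lemma phi_conv_units_left:
  assumes "a \<in> C0_on G (units G)" "b \<in> C0_on G U"
  shows "\<phi> (conv G a b) y = \<phi> a (H.r y) * \<phi> b y"
proof -
  have "\<phi> a x = 0" if "x \<notin> units H" for x
    using H.C0_on_vanish[OF phi_units[OF assms(1)]] V_units that by blast
  then show ?thesis using phi_conv[OF assms] H.conv_units_left by metis
qed

lemma cnj_phi_mult_phi_at_Phi: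
  assumes \<alpha>: "G.d \<alpha> \<in> F" "\<alpha> \<in> U" "\<alpha> \<in> W"
    and U: "U \<in> open_bisections G" and W: "W \<in> open_bisections G"
    and n: "n \<in> C0_on G U" and m: "m \<in> C0_on G W"
  shows "cnj (\<phi> m (\<Phi> \<alpha>)) * \<phi> n (\<Phi> \<alpha>) = cnj (m \<alpha>) * n \<alpha>"
proof -
  have "open (G.d ` (U \<inter> W))"
    using U W by (intro G.open_d_image open_Int) (simp_all add: open_bisectionsD)
  then obtain f where f: "f \<in> Cc_on (G.d ` (U \<inter> W))" "f (G.d \<alpha>) = 1" "\<And>x. cmod (f x) \<le> 1"
    by (rule exists_Cc_bump[OF G.locally_compact]) (use \<alpha> in auto)
  then have f_units: "f \<in> C0_on G (units G)"
    using Cc_on_mono G.Cc_on_subset_C0_on by (metis G.d_in_units image_subsetI)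
  define k where "k = conv G (invol G m) n"
  have k: "k \<in> C0_on G (bis_prod G (G.i ` W) U)"
    unfolding k_def by (rule G.C0_on_conv[OF G.inv_image_open_bisection[OF W] U G.C0_on_invol[OF W m] n])
  have "\<phi> (conv G f k) (\<sigma> (G.d \<alpha>)) = conv G f k (G.d \<alpha>)"
    by (rule phi_sigma[OF G.C0_on_units_conv_bump[OF U W k f(1,3)] \<alpha>(1)])
  also have "\<dots> = f (G.d \<alpha>) * k (G.d \<alpha>)"
    using G.conv_units_left[of f] G.C0_on_vanish[OF f_units] by simp
  also have "\<dots> = cnj (m \<alpha>) * n \<alpha>"
    unfolding k_def using G.conv_invol_at_unit[OF G.C0_on_vanish[OF n] open_bisectionsD(2)[OF U] \<alpha>(2)] f(2)
    by simp
  finally have lhs: "\<phi> (conv G f k) (\<sigma> (G.d \<alpha>)) = cnj (m \<alpha>) * n \<alpha>" .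
  have y: "\<sigma> (G.d \<alpha>) = H.d (\<Phi> \<alpha>)" "\<sigma> (G.d \<alpha>) \<in> units H"
    using d_Phi[OF \<alpha>(1) U \<alpha>(2)] sigma_image V_units \<alpha>(1) by auto
  have "\<phi> (conv G f k) (\<sigma> (G.d \<alpha>)) = \<phi> f (\<sigma> (G.d \<alpha>)) * \<phi> k (\<sigma> (G.d \<alpha>))"
    using phi_conv_units_left[OF f_units k] H.r_unit[OF y(2)] by simp
  also have "\<phi> f (\<sigma> (G.d \<alpha>)) = 1" using phi_sigma[OF f_units \<alpha>(1)] f(2) by simp
  also have "\<phi> k = conv H (invol H (\<phi> m)) (\<phi> n)"
    unfolding k_def phi_conv[OF G.C0_on_invol[OF W m] n] phi_invol[OF m] ..
  also have "\<dots> (\<sigma> (G.d \<alpha>)) = cnj (\<phi> m (\<Phi> \<alpha>)) * \<phi> n (\<Phi> \<alpha>)"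
    unfolding y(1) using psi_open_bisection[OF U] Phi_mem[OF \<alpha>(1) U \<alpha>(2)]
    by (intro H.conv_invol_at_unit[OF H.C0_on_vanish[OF phi_C0_on[OF U n]]]) (simp_all add: open_bisectionsD)
  finally show ?thesis using lhs by simp
qed

lemma norm_phi_at_Phi:
  assumes "G.d \<alpha> \<in> F" "U \<in> open_bisections G" "\<alpha> \<in> U" "n \<in> C0_on G U"
  shows "cmod (\<phi> n (\<Phi> \<alpha>)) = cmod (n \<alpha>)"
proof -
  have "complex_of_real ((cmod (\<phi> n (\<Phi> \<alpha>)))\<^sup>2) = complex_of_real ((cmod (n \<alpha>))\<^sup>2)"
    using cnj_phi_mult_phi_at_Phi[OF assms(1,3,3,2,2,4,4)]
    by (simp only: complex_norm_square) (simp add: mult.commute)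
  then have "(cmod (\<phi> n (\<Phi> \<alpha>)))\<^sup>2 = (cmod (n \<alpha>))\<^sup>2" by (rule of_real_eq_iff[THEN iffD1])
  then show ?thesis by (simp add: power2_eq_iff_nonneg)
qed

lemma phi_ratio_eq:
  assumes \<alpha>: "G.d \<alpha> \<in> F" "\<alpha> \<in> U" "\<alpha> \<in> W" and U: "U \<in> open_bisections G" and W: "W \<in> open_bisections G"
    and n: "n \<in> C0_on G U" "n \<alpha> \<noteq> 0" and m: "m \<in> C0_on G W" "m \<alpha> \<noteq> 0"
  shows "\<phi> n (\<Phi> \<alpha>) / n \<alpha> = \<phi> m (\<Phi> \<alpha>) / m \<alpha>"
proof -
  define z where "z = \<phi> m (\<Phi> \<alpha>) / m \<alpha>"
  have "cmod z = 1" using norm_phi_at_Phi[OF \<alpha>(1) W \<alpha>(3) m(1)] m(2) by (simp add: z_def norm_divide)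
  then have z: "z * cnj z = 1" by (simp add: complex_norm_square[symmetric])
  have w: "cnj z * (\<phi> n (\<Phi> \<alpha>) / n \<alpha>) = 1"
    using cnj_phi_mult_phi_at_Phi[OF \<alpha> U W n(1) m(1)] n(2) m(2) by (simp add: z_def field_simps)
  have "\<phi> n (\<Phi> \<alpha>) / n \<alpha> = z * cnj z * (\<phi> n (\<Phi> \<alpha>) / n \<alpha>)" using z by simp
  also have "\<dots> = z" using w by (simp add: mult.assoc)
  finally show ?thesis by (simp add: z_def)
qed

definition phase :: "'g \<Rightarrow> complex" where
  "phase \<alpha> = (SOME z. \<exists>U n. U \<in> open_bisections G \<and> \<alpha> \<in> U \<and> n \<in> C0_on G U \<and> n \<alpha> \<noteq> 0 \<and>
                           z = \<phi> n (\<Phi> \<alpha>) / n \<alpha>)"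

lemma phase_eq:
  assumes "G.d \<alpha> \<in> F" "U \<in> open_bisections G" "\<alpha> \<in> U" "n \<in> C0_on G U" "n \<alpha> \<noteq> 0"
  shows "phase \<alpha> = \<phi> n (\<Phi> \<alpha>) / n \<alpha>"
proof -
  have "\<exists>z. \<exists>U n. U \<in> open_bisections G \<and> \<alpha> \<in> U \<and> n \<in> C0_on G U \<and> n \<alpha> \<noteq> 0 \<and>
              z = \<phi> n (\<Phi> \<alpha>) / n \<alpha>"
    using assms by blast
  then have "\<exists>U n. U \<in> open_bisections G \<and> \<alpha> \<in> U \<and> n \<in> C0_on G U \<and> n \<alpha> \<noteq> 0 \<and>
              phase \<alpha> = \<phi> n (\<Phi> \<alpha>) / n \<alpha>"
    unfolding phase_def by (rule someI_ex)
  then obtain U' n' where U': "U' \<in> open_bisections G" "\<alpha> \<in> U'" "n' \<in> C0_on G U'" "n' \<alpha> \<noteq> 0"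
    "phase \<alpha> = \<phi> n' (\<Phi> \<alpha>) / n' \<alpha>"
    by blast
  show ?thesis using phi_ratio_eq[OF assms(1) U'(2) assms(3) U'(1) assms(2) U'(3,4) assms(4,5)] U'(5)
    by simp
qed

lemma norm_phase: assumes "G.d \<alpha> \<in> F" shows "cmod (phase \<alpha>) = 1"
proof -
  obtain U n where U: "U \<in> open_bisections G" "\<alpha> \<in> U" "n \<in> C0_on G U" "n \<alpha> = 1"
    by (rule G.exists_C0_on_bisection_one)
  then show ?thesis using phase_eq[OF assms U(1-3)] norm_phi_at_Phi[OF assms U(1-3)] by simp
qed

lemma phi_at_Phi:
  assumes \<alpha>: "G.d \<alpha> \<in> F" "\<alpha> \<in> U" and U: "U \<in> open_bisections G" and n: "n \<in> C0_on G U"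
  shows "\<phi> n (\<Phi> \<alpha>) = phase \<alpha> * n \<alpha>"
proof (cases "n \<alpha> = 0")
  case True
  then show ?thesis using norm_phi_at_Phi[OF \<alpha>(1) U \<alpha>(2) n] by simp
next
  case False
  then show ?thesis using phase_eq[OF \<alpha>(1) U \<alpha>(2) n] by simp
qed

lemma phi_at_r_Phi:
  assumes \<beta>: "G.d \<beta> \<in> F" and f: "f \<in> Cc_on (units G)"
  shows "\<phi> f (H.r (\<Phi> \<beta>)) = f (G.r \<beta>)"
proof -
  obtain W m where W: "W \<in> open_bisections G" "\<beta> \<in> W" "m \<in> C0_on G W" "m \<beta> = 1"
    by (rule G.exists_C0_on_bisection_one)
  obtain K where K: "\<And>x. cmod (f x) \<le> K" using Cc_on_bounded[OF f] by blast
  have f_units: "f \<in> C0_on G (units G)" by (rule G.Cc_on_subset_C0_on[OF f])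
  have "conv G f m = (\<lambda>\<gamma>. f (G.r \<gamma>) * m \<gamma>)"
    using G.conv_units_left[of f] Cc_on_vanish[OF f] by (simp add: fun_eq_iff)
  moreover have "(\<lambda>\<gamma>. f (G.r \<gamma>) * m \<gamma>) \<in> C0_on G W"
    using f K by (intro G.C0_on_mult_left[OF W(1,3)] continuous_on_compose2[OF _ G.continuous_on_r])
      (auto simp: Cc_on_def)
  ultimately have "\<phi> (conv G f m) (\<Phi> \<beta>) = phase \<beta> * f (G.r \<beta>)"
    using phi_at_Phi[OF \<beta> W(2) W(1)] W(4) by simp
  moreover have "\<phi> (conv G f m) (\<Phi> \<beta>) = \<phi> f (H.r (\<Phi> \<beta>)) * phase \<beta>"
    using phi_conv_units_left[OF f_units W(3)] phi_at_Phi[OF \<beta> W(2,1,3)] W(4) by simp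
  moreover have "phase \<beta> \<noteq> 0" using norm_phase[OF \<beta>] by auto
  ultimately show ?thesis by simp
qed

text \<open>Bumps on the unit space separate points, and \<open>\<phi> f (\<sigma> x) = f x\<close>.\<close>
lemma r_Phi:
  assumes \<beta>: "G.d \<beta> \<in> F" shows "H.r (\<Phi> \<beta>) = \<sigma> (G.r \<beta>)"
proof -
  obtain f1 where f1: "f1 \<in> Cc_on (units G)" "f1 (G.r \<beta>) = 1"
    using G.exists_Cc_on_units_bump[of "G.r \<beta>" "{}"] by auto
  have "H.r (\<Phi> \<beta>) \<in> V"
    using H.C0_on_vanish[OF phi_units[OF G.Cc_on_subset_C0_on[OF f1(1)]]] phi_at_r_Phi[OF \<beta> f1(1)] f1(2)
    by fastforce
  then obtain x where x: "x \<in> F" "H.r (\<Phi> \<beta>) = \<sigma> x" using sigma_image by blast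
  have "x = G.r \<beta>"
  proof (rule ccontr)
    assume "x \<noteq> G.r \<beta>"
    then obtain f2 where f2: "f2 \<in> Cc_on (units G)" "f2 (G.r \<beta>) = 1" "f2 x = 0"
      using G.exists_Cc_on_units_bump[of "G.r \<beta>" "{x}"] by auto
    have "f2 (G.r \<beta>) = \<phi> f2 (\<sigma> x)" using phi_at_r_Phi[OF \<beta> f2(1)] x(2) by simp
    also have "\<dots> = f2 x" by (rule phi_sigma[OF G.Cc_on_subset_C0_on[OF f2(1)] x(1)])
    finally show False using f2 by simp
  qed
  then show ?thesis using x by simp
qed

lemma Phi_mult:
  assumes \<alpha>: "G.d \<alpha> \<in> F" and \<beta>: "G.d \<beta> \<in> F" and comp: "G.d \<alpha> = G.r \<beta>"
  shows "\<Phi> (G.m \<alpha> \<beta>) = H.m (\<Phi> \<alpha>) (\<Phi> \<beta>)"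
proof -
  obtain U where U: "U \<in> open_bisections G" "\<alpha> \<in> U" by (rule G.exists_open_bisection)
  obtain W where W: "W \<in> open_bisections G" "\<beta> \<in> W" by (rule G.exists_open_bisection)
  have \<alpha>\<beta>: "G.m \<alpha> \<beta> \<in> bis_prod G U W" "G.d (G.m \<alpha> \<beta>) \<in> F"
    using U W comp \<beta> unfolding bis_prod_def by auto
  then have "\<Phi> (G.m \<alpha> \<beta>) \<in> bis_prod H (\<psi> U) (\<psi> W)"
    using Phi_mem[OF \<alpha>\<beta>(2) G.bis_prod_open_bisection[OF U(1) W(1)]] psi_bis_prod[OF U(1) W(1)] by simp
  then obtain x y where xy: "x \<in> \<psi> U" "y \<in> \<psi> W" "H.d x = H.r y" "\<Phi> (G.m \<alpha> \<beta>) = H.m x y"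
    unfolding bis_prod_def by blast
  have "H.d y = H.d (\<Phi> \<beta>)"
    using xy d_Phi[OF \<alpha>\<beta>(2) G.bis_prod_open_bisection[OF U(1) W(1)] \<alpha>\<beta>(1)] d_Phi[OF \<beta> W] comp by simp
  then have y: "y = \<Phi> \<beta>"
    using xy(2) Phi_mem[OF \<beta> W] open_bisectionsD(2)[OF psi_open_bisection[OF W(1)]] by (auto dest: inj_onD)
  have "H.d x = H.d (\<Phi> \<alpha>)" using xy(3) y r_Phi[OF \<beta>] d_Phi[OF \<alpha> U] comp by simp
  then have "x = \<Phi> \<alpha>"
    using xy(1) Phi_mem[OF \<alpha> U] open_bisectionsD(2)[OF psi_open_bisection[OF U(1)]] by (auto dest: inj_onD)
  then show ?thesis using xy(4) y by simp
qed

lemma phase_mult: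
  assumes \<alpha>: "G.d \<alpha> \<in> F" and \<beta>: "G.d \<beta> \<in> F" and comp: "G.d \<alpha> = G.r \<beta>"
  shows "phase (G.m \<alpha> \<beta>) = phase \<alpha> * phase \<beta>"
proof -
  obtain U n where U: "U \<in> open_bisections G" "\<alpha> \<in> U" "n \<in> C0_on G U" "n \<alpha> = 1"
    by (rule G.exists_C0_on_bisection_one)
  obtain W m where W: "W \<in> open_bisections G" "\<beta> \<in> W" "m \<in> C0_on G W" "m \<beta> = 1"
    by (rule G.exists_C0_on_bisection_one)
  have UW: "bis_prod G U W \<in> open_bisections G" by (rule G.bis_prod_open_bisection[OF U(1) W(1)])
  have \<alpha>\<beta>: "G.m \<alpha> \<beta> \<in> bis_prod G U W" "G.d (G.m \<alpha> \<beta>) \<in> F"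
    using U W comp \<beta> unfolding bis_prod_def by auto
  have "conv G n m (G.m \<alpha> \<beta>) = 1"
    using G.conv_bisection_mult[OF G.C0_on_vanish[OF W(3)] open_bisectionsD(2)[OF W(1)] W(2) comp] U(4) W(4)
    by simp
  then have "phase (G.m \<alpha> \<beta>) = \<phi> (conv G n m) (\<Phi> (G.m \<alpha> \<beta>))"
    using phi_at_Phi[OF \<alpha>\<beta>(2,1) UW G.C0_on_conv[OF U(1) W(1) U(3) W(3)]] by simp
  also have "\<dots> = conv H (\<phi> n) (\<phi> m) (H.m (\<Phi> \<alpha>) (\<Phi> \<beta>))"
    unfolding phi_conv[OF U(3) W(3)] Phi_mult[OF \<alpha> \<beta> comp] ..
  also have "\<dots> = \<phi> n (\<Phi> \<alpha>) * \<phi> m (\<Phi> \<beta>)"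
    using H.conv_bisection_mult[OF H.C0_on_vanish[OF phi_C0_on[OF W(1,3)]]
        open_bisectionsD(2)[OF psi_open_bisection[OF W(1)]] Phi_mem[OF \<beta> W(1,2)]]
      d_Phi[OF \<alpha> U(1,2)] r_Phi[OF \<beta>] comp
    by simp
  also have "\<dots> = phase \<alpha> * phase \<beta>"
    using phi_at_Phi[OF \<alpha> U(2,1,3)] phi_at_Phi[OF \<beta> W(2,1,3)] U(4) W(4) by simp
  finally show ?thesis .
qed

lemma continuous_on_Phi:
  assumes U: "U \<in> open_bisections G" shows "continuous_on ({\<alpha>. G.d \<alpha> \<in> F} \<inter> U) \<Phi>"
proof -
  let ?S = "{\<alpha>. G.d \<alpha> \<in> F} \<inter> U"
  obtain s where s: "homeomorphism (\<psi> U) (H.d ` \<psi> U) H.d s"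
    using H.d_homeomorphism_on_bisection open_bisectionsD[OF psi_open_bisection[OF U]] by blast
  have \<Phi>: "\<Phi> \<gamma> \<in> \<psi> U" "H.d (\<Phi> \<gamma>) = \<sigma> (G.d \<gamma>)" if "\<gamma> \<in> ?S" for \<gamma>
    using that Phi_mem[OF _ U] d_Phi[OF _ U] by auto
  have "continuous_on ?S (\<lambda>\<gamma>. \<sigma> (G.d \<gamma>))"
    by (rule continuous_on_compose2[OF sigma_continuous continuous_on_subset[OF G.continuous_on_d]]) auto
  then have "continuous_on ?S (\<lambda>\<gamma>. s (\<sigma> (G.d \<gamma>)))"
    by (rule continuous_on_compose2[OF homeomorphism_cont2[OF s]]) (use \<Phi> in force)
  moreover have "s (\<sigma> (G.d \<gamma>)) = \<Phi> \<gamma>" if "\<gamma> \<in> ?S" for \<gamma>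
    using homeomorphism_apply1[OF s \<Phi>(1)[OF that]] \<Phi>(2)[OF that] by simp
  ultimately show ?thesis by (rule continuous_on_eq)
qed

lemma continuous_on_phase: "continuous_on {\<alpha>. G.d \<alpha> \<in> F} phase"
proof (rule continuous_on_open_cover)
  fix \<alpha> assume "\<alpha> \<in> {\<alpha>. G.d \<alpha> \<in> F}"
  obtain U n where U: "U \<in> open_bisections G" "\<alpha> \<in> U" "n \<in> C0_on G U" "n \<alpha> = 1"
    and n: "continuous_on UNIV n"
    by (rule G.exists_C0_on_bisection_one)
  define N where "N = U \<inter> {\<gamma>. n \<gamma> \<noteq> 0}"
  have "open N"
    unfolding N_def using open_bisectionsD(1)[OF U(1)] open_Collect_neq[OF n continuous_on_const] by blast
  have "continuous_on ({\<alpha>. G.d \<alpha> \<in> F} \<inter> N) (\<lambda>\<gamma>. \<phi> n (\<Phi> \<gamma>) / n \<gamma>)"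
  proof (intro continuous_on_divide continuous_on_compose2[OF _ continuous_on_subset[OF continuous_on_Phi[OF U(1)]]])
    show "continuous_on UNIV (\<phi> n)" by (rule H.C0_on_continuous[OF psi_open_bisection phi_C0_on]) (use U in auto)
    show "continuous_on ({\<alpha>. G.d \<alpha> \<in> F} \<inter> N) n" using n continuous_on_subset by blast
  qed (auto simp: N_def)
  moreover have "\<phi> n (\<Phi> \<gamma>) / n \<gamma> = phase \<gamma>" if "\<gamma> \<in> {\<alpha>. G.d \<alpha> \<in> F} \<inter> N" for \<gamma>
    using that phase_eq[OF _ U(1) _ U(3)] by (simp add: N_def)
  ultimately have "continuous_on ({\<alpha>. G.d \<alpha> \<in> F} \<inter> N) phase" by (rule continuous_on_eq)
  then show "\<exists>N. open N \<and> \<alpha> \<in> N \<and> continuous_on ({\<alpha>. G.d \<alpha> \<in> F} \<inter> N) phase"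
    using \<open>open N\<close> U by (auto simp: N_def)
qed

end

theorem mainTheorem7:
  fixes G :: "('g::t2_space) groupoid" and H :: "('h::t2_space) groupoid"
    and \<phi> :: "('g \<Rightarrow> complex) \<Rightarrow> ('h \<Rightarrow> complex)"
    and F :: "'g set" and \<psi> :: "'g set \<Rightarrow> 'h set"
    and \<sigma> :: "'g \<Rightarrow> 'h" and V :: "'h set" and \<Phi> :: "'g \<Rightarrow> 'h"
  assumes G_etale: "etale_groupoid G"
    and H_etale: "etale_groupoid H"
    and H_eff: "effective H"
    and phi_hom: "star_hom G H \<phi>"
    and phi_units: "\<phi> ` C0_on G (units G) \<subseteq> C0_on H (units H)"
    and phi_ideal: "\<forall>a\<in>\<phi> ` C0_on G (units G). \<forall>b\<in>C0_on H (units H).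
                      conv H b a \<in> \<phi> ` C0_on G (units G) \<and> conv H a b \<in> \<phi> ` C0_on G (units G)"
    and F_sub: "F \<subseteq> units G"
    and F_closed: "closedin (top_of_set (units G)) F"
    and F_inv: "\<forall>\<gamma>. gsrc G \<gamma> \<in> F \<longleftrightarrow> grng G \<gamma> \<in> F"
    and F_ker: "{a \<in> C0_on G (units G). \<phi> a = (\<lambda>_. 0)} = C0_on G (units G - F)"
    and psi_bis: "\<forall>U\<in>open_bisections G. \<psi> U \<in> open_bisections H \<and> \<phi> ` C0_on G U = C0_on H (\<psi> U)"
    and psi_mult: "\<forall>U\<in>open_bisections G. \<forall>W\<in>open_bisections G.
                     \<psi> (bis_prod G U W) = bis_prod H (\<psi> U) (\<psi> W)"
    and V_open: "open V" and V_sub: "V \<subseteq> units H"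
    and sigma_homeo: "\<exists>\<sigma>'. homeomorphism F V \<sigma> \<sigma>'"
    and V_image: "\<phi> ` C0_on G (units G) = C0_on H V"
    and sigma_eval: "\<forall>f\<in>C0_on G (units G). \<forall>x\<in>F. \<phi> f (\<sigma> x) = f x"
    and Phi_def: "\<forall>\<alpha>. gsrc G \<alpha> \<in> F \<longrightarrow> (\<forall>U\<in>open_bisections G. \<alpha> \<in> U \<longrightarrow>
                    \<Phi> \<alpha> \<in> \<psi> U \<and> gsrc H (\<Phi> \<alpha>) = \<sigma> (gsrc G \<alpha>))"
  shows "\<exists>c :: 'g \<Rightarrow> complex.
           (\<forall>\<alpha>\<in>{\<alpha>. gsrc G \<alpha> \<in> F}. cmod (c \<alpha>) = 1 \<and>
              (\<forall>U n. U \<in> open_bisections G \<and> \<alpha> \<in> U \<and> n \<in> C0_on G U \<and> n \<alpha> \<noteq> 0 \<longrightarrow>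
                     c \<alpha> = \<phi> n (\<Phi> \<alpha>) / n \<alpha>)) \<and>
           continuous_on {\<alpha>. gsrc G \<alpha> \<in> F} c \<and>
           (\<forall>\<alpha> \<beta>. gsrc G \<alpha> \<in> F \<and> gsrc G \<beta> \<in> F \<and> gsrc G \<alpha> = grng G \<beta> \<longrightarrow>
              c (gmul G \<alpha> \<beta>) = c \<alpha> * c \<beta>)"
proof -
  obtain \<sigma>' where \<sigma>: "homeomorphism F V \<sigma> \<sigma>'" using sigma_homeo by blast
  interpret reduced_algebra_hom G H \<phi> F \<psi> \<sigma> V \<Phi>
  proof unfold_locales
    show "is_groupoid G" "etale_groupoid G" "is_groupoid H" "etale_groupoid H"
      using G_etale H_etale by (simp_all add: etale_groupoid_def)
    show "continuous_on F \<sigma>" "\<sigma> ` F = V"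
      using homeomorphism_cont1[OF \<sigma>] homeomorphism_image1[OF \<sigma>] by simp_all
  qed (use phi_hom psi_bis psi_mult V_sub V_image sigma_eval Phi_def in auto)
  show ?thesis
  proof (intro exI[of _ phase] conjI ballI allI impI)
    fix \<alpha> assume "\<alpha> \<in> {\<alpha>. G.d \<alpha> \<in> F}"
    then show "cmod (phase \<alpha>) = 1" by (simp add: norm_phase)
    show "phase \<alpha> = \<phi> n (\<Phi> \<alpha>) / n \<alpha>"
      if "U \<in> open_bisections G \<and> \<alpha> \<in> U \<and> n \<in> C0_on G U \<and> n \<alpha> \<noteq> 0" for U n
      using that \<open>\<alpha> \<in> {\<alpha>. G.d \<alpha> \<in> F}\<close> phase_eq by blast
  qed (use continuous_on_phase phase_mult in auto)
qed

end
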